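(* Let $\sigma:\mathcal{A}^*\to\mathcal{B}^*$ be an injective and strongly left proper morphism. The following are equivalent: (1) the sets $\mathcal{T}^-(\sigma)$ and $\mathcal{T}^+(\sigma)$ each contain exactly one element; (2) for every shift space $X$ over $\mathcal{A}$ and every dendric bispecial factor $v\in\mathcal{L}(X)$, $\sigma$ is dendric preserving for $v$.
   Context: A shift space over $\mathcal{A}$ is a closed shift-invariant $X\subseteq\mathcal{A}^{\mathbb{Z}}$ in which all letters occur, with factor set $\mathcal{L}(X)$. For $w\in\mathcal{L}(X)$: $E^-_X(w)=\{a:aw\in\mathcal{L}(X)\}$, $E^+_X(w)=\{b:wb\in\mathcal{L}(X)\}$, $E_X(w)=\{(a,b):awb\in\mathcal{L}(X)\}$; $\mathcal{E}_X(w)$ is the bipartite graph with left vertices $E^-_X(w)$, right vertices $E^+_X(w)$ and edges $E_X(w)$; $w$ is bispecial if $\#E^\pm_X(w)\ge2$, dendric if $\mathcal{E}_X(w)$ is a tree. Morphisms are non-erasing; $\sigma$ is strongly left proper with first letter $\ell$ if every $\sigma(a)$ begins with $\ell$ and contains $\ell$ exactly once. Image of $X$: $Y=\{S^k\sigma(x):x\in X,0\le k<|\sigma(x_0)|\}$. For non-empty $u\in\mathcal{L}(Y)$ containing $\ell$ there is a unique triple $(s,v,p)$, $v\in\mathcal{L}(X)$, $u=s\sigma(v)p$, with $s$ a proper suffix of $\sigma(a)$, $p$ a non-empty prefix of $\sigma(b)$ for some $(a,b)\in E_X(v)$; $u$ is then an extended image of $v$. $\sigma$ is dendric preserving for $v$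 if every bispecial extended image of $v$ is dendric in $Y$. $\mathcal{T}^-(\sigma)=\{s(a_1,a_2):a_1,a_2\in\mathcal{A},a_1\ne a_2\}$ and $\mathcal{T}^+(\sigma)=\{p(b_1,b_2):b_1\ne b_2\}$, where $s(a_1,a_2)$ (resp. $p(b_1,b_2)$) is the longest common suffix of $\sigma(a_1),\sigma(a_2)$ (resp. longest common prefix of $\sigma(b_1),\sigma(b_2)$). *)

theory Defs
  imports "HOL-Analysis.Analysis" "HOL-Library.Sublist"
begin

definition morph :: "('a \<Rightarrow> 'b list) \<Rightarrow> 'a list \<Rightarrow> 'b list" where
  "morph \<sigma> w = concat (map \<sigma> w)"

definition is_morphism :: "'a set \<Rightarrow> 'b set \<Rightarrow> ('a \<Rightarrow> 'b list) \<Rightarrow> bool" where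
  "is_morphism A B \<sigma> \<longleftrightarrow> (\<forall>a\<in>A. \<sigma> a \<in> lists B \<and> \<sigma> a \<noteq> [])"

definition injective_morphism :: "'a set \<Rightarrow> ('a \<Rightarrow> 'b list) \<Rightarrow> bool" where
  "injective_morphism A \<sigma> \<longleftrightarrow> inj_on (morph \<sigma>) (lists A)"

definition strongly_left_proper :: "'a set \<Rightarrow> ('a \<Rightarrow> 'b list) \<Rightarrow> 'b \<Rightarrow> bool" where
  "strongly_left_proper A \<sigma> l \<longleftrightarrow>
     (\<forall>a\<in>A. \<sigma> a \<noteq> [] \<and> hd (\<sigma> a) = l \<and> count_list (\<sigma> a) l = 1)"

definition longest_common_suffix :: "'a list \<Rightarrow> 'a list \<Rightarrow> 'a list" where
  "longest_common_suffix xs ys = rev (longest_common_prefix (rev xs) (rev ys))"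

definition Tminus :: "'a set \<Rightarrow> ('a \<Rightarrow> 'b list) \<Rightarrow> 'b list set" where
  "Tminus A \<sigma> = {longest_common_suffix (\<sigma> a1) (\<sigma> a2) | a1 a2. a1 \<in> A \<and> a2 \<in> A \<and> a1 \<noteq> a2}"

definition Tplus :: "'a set \<Rightarrow> ('a \<Rightarrow> 'b list) \<Rightarrow> 'b list set" where
  "Tplus A \<sigma> = {longest_common_prefix (\<sigma> b1) (\<sigma> b2) | b1 b2. b1 \<in> A \<and> b2 \<in> A \<and> b1 \<noteq> b2}"

definition shift :: "(int \<Rightarrow> 'a) \<Rightarrow> int \<Rightarrow> 'a" where
  "shift x = (\<lambda>i. x (i + 1))"

definition shift_space :: "'a set \<Rightarrow> (int \<Rightarrow> 'a) set \<Rightarrow> bool" where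
  "shift_space A X \<longleftrightarrow>
     X \<subseteq> (UNIV \<rightarrow> A) \<and>
     closedin (product_topology (\<lambda>_::int. discrete_topology A) UNIV) X \<and>
     shift ` X = X \<and>
     (\<forall>a\<in>A. \<exists>x\<in>X. \<exists>i. x i = a)"

definition lang :: "(int \<Rightarrow> 'a) set \<Rightarrow> 'a list set" where
  "lang X = {w. \<exists>x\<in>X. \<exists>i::int. w = map (\<lambda>j. x (i + int j)) [0..<length w]}"

text \<open>Image of a bi-infinite sequence under a non-erasing morphism, with sigma(x_0) starting
  at position 0.\<close>
definition spos :: "('a \<Rightarrow> 'b list) \<Rightarrow> (int \<Rightarrow> 'a) \<Rightarrow> int \<Rightarrow> int" where
  "spos \<sigma> x n = (if n \<ge> 0 then int (\<Sum>i\<in>{0..<n}. length (\<sigma> (x i)))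
                  else - int (\<Sum>i\<in>{n..<0}. length (\<sigma> (x i))))"

definition seq_image :: "('a \<Rightarrow> 'b list) \<Rightarrow> (int \<Rightarrow> 'a) \<Rightarrow> int \<Rightarrow> 'b" where
  "seq_image \<sigma> x m =
     (let n = (THE n. spos \<sigma> x n \<le> m \<and> m < spos \<sigma> x (n + 1))
      in \<sigma> (x n) ! nat (m - spos \<sigma> x n))"

definition shift_image :: "('a \<Rightarrow> 'b list) \<Rightarrow> (int \<Rightarrow> 'a) set \<Rightarrow> (int \<Rightarrow> 'b) set" where
  "shift_image \<sigma> X = {(\<lambda>i. seq_image \<sigma> x (i + int k)) | x k. x \<in> X \<and> k < length (\<sigma> (x 0))}"

definition Eminus :: "(int \<Rightarrow> 'a) set \<Rightarrow> 'a list \<Rightarrow> 'a set" where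
  "Eminus X w = {a. a # w \<in> lang X}"

definition Eplus :: "(int \<Rightarrow> 'a) set \<Rightarrow> 'a list \<Rightarrow> 'a set" where
  "Eplus X w = {b. w @ [b] \<in> lang X}"

definition Ext :: "(int \<Rightarrow> 'a) set \<Rightarrow> 'a list \<Rightarrow> ('a \<times> 'a) set" where
  "Ext X w = {(a, b). a # w @ [b] \<in> lang X}"

definition graph_connected :: "'v set \<Rightarrow> ('v \<Rightarrow> 'v \<Rightarrow> bool) \<Rightarrow> bool" where
  "graph_connected V E \<longleftrightarrow> V \<noteq> {} \<and>
     (\<forall>x\<in>V. \<forall>y\<in>V. (x, y) \<in> {(u, v). u \<in> V \<and> v \<in> V \<and> E u v}\<^sup>*)"

definition graph_acyclic :: "'v set \<Rightarrow> ('v \<Rightarrow> 'v \<Rightarrow> bool) \<Rightarrow> bool" where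
  "graph_acyclic V E \<longleftrightarrow>
     \<not> (\<exists>cs. length cs \<ge> 3 \<and> distinct cs \<and> set cs \<subseteq> V \<and>
            (\<forall>i < length cs. E (cs ! i) (cs ! ((i + 1) mod length cs))))"

definition is_tree :: "'v set \<Rightarrow> ('v \<Rightarrow> 'v \<Rightarrow> bool) \<Rightarrow> bool" where
  "is_tree V E \<longleftrightarrow> graph_connected V E \<and> graph_acyclic V E"

text \<open>Extension graph: bipartite, left copy of E^-, right copy of E^+, edges from E(w).\<close>
definition ext_graph_vertices :: "(int \<Rightarrow> 'a) set \<Rightarrow> 'a list \<Rightarrow> ('a + 'a) set" where
  "ext_graph_vertices X w = Inl ` Eminus X w \<union> Inr ` Eplus X w"

definition ext_graph_adj :: "(int \<Rightarrow> 'a) set \<Rightarrow> 'a list \<Rightarrow> ('a + 'a) \<Rightarrow> ('a + 'a) \<Rightarrow> bool" where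
  "ext_graph_adj X w u v \<longleftrightarrow>
     (\<exists>a b. (a, b) \<in> Ext X w \<and> ((u = Inl a \<and> v = Inr b) \<or> (u = Inr b \<and> v = Inl a)))"

definition bispecial :: "(int \<Rightarrow> 'a) set \<Rightarrow> 'a list \<Rightarrow> bool" where
  "bispecial X w \<longleftrightarrow> w \<in> lang X \<and> card (Eminus X w) \<ge> 2 \<and> card (Eplus X w) \<ge> 2"

definition dendric :: "(int \<Rightarrow> 'a) set \<Rightarrow> 'a list \<Rightarrow> bool" where
  "dendric X w \<longleftrightarrow> w \<in> lang X \<and> is_tree (ext_graph_vertices X w) (ext_graph_adj X w)"

definition extended_image ::
  "('a \<Rightarrow> 'b list) \<Rightarrow> 'b \<Rightarrow> (int \<Rightarrow> 'a) set \<Rightarrow> 'b list \<Rightarrow> 'a list \<Rightarrow> bool" where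
  "extended_image \<sigma> l X u v \<longleftrightarrow>
     u \<in> lang (shift_image \<sigma> X) \<and> u \<noteq> [] \<and> l \<in> set u \<and> v \<in> lang X \<and>
     (\<exists>s p a b. (a, b) \<in> Ext X v \<and> strict_suffix s (\<sigma> a) \<and> p \<noteq> [] \<and> prefix p (\<sigma> b) \<and>
                u = s @ morph \<sigma> v @ p)"

definition dendric_preserving ::
  "('a \<Rightarrow> 'b list) \<Rightarrow> 'b \<Rightarrow> (int \<Rightarrow> 'a) set \<Rightarrow> 'a list \<Rightarrow> bool" where
  "dendric_preserving \<sigma> l X v \<longleftrightarrow>
     (\<forall>u. extended_image \<sigma> l X u v \<and> bispecial (shift_image \<sigma> X) u
          \<longrightarrow> dendric (shift_image \<sigma> X) u)"

end

theory Submission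
  imports Defs
begin

text \<open>Write \<open>\<sigma> a = l # r\<^sub>a\<close> with \<open>l\<close> not in \<open>r\<^sub>a\<close>. Every occurrence of \<open>l\<close> in the
  image of a sequence starts the image of a letter, so an extended image \<open>s @ \<sigma> v @ p\<close> is read
  off uniquely. Its extensions are the pairs of the letter preceding \<open>s\<close> in \<open>\<sigma> a\<close> and the
  letter following \<open>p\<close> in \<open>\<sigma> b\<close> (\<open>l\<close> if \<open>p = \<sigma> b\<close>), over the extensions \<open>(a, b)\<close> of \<open>v\<close>
  such that \<open>s\<close> is a proper suffix of \<open>\<sigma> a\<close> and \<open>p\<close> a prefix of \<open>\<sigma> b\<close>.

  If \<open>T\<^sup>-\<close> and \<open>T\<^sup>+\<close> are singletons, two distinct left extensions of such a word force \<open>s\<close>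
  to be the common suffix at which all images branch, so every letter qualifies and distinct
  letters yield distinct preceding letters; the same holds on the right. The extension graph
  of the extended image is then an isomorphic copy of that of \<open>v\<close>.

  If, say, \<open>T\<^sup>-\<close> has at least two elements, all images end with its shortest element \<open>s\<close>,
  and there are letters \<open>a\<^sub>1, a\<^sub>2, a\<^sub>3\<close> such that \<open>a\<^sub>1, a\<^sub>2\<close> have the same letter
  before \<open>s\<close> and \<open>a\<^sub>3\<close> another one. In a periodic shift space in which \<open>v\<close> has the path
  \<open>a\<^sub>1 - b\<^sub>1 - a\<^sub>3 - b\<^sub>2 - a\<^sub>2\<close> as extension graph, the extended image of \<open>v\<close> determined
  by \<open>s\<close> and the common prefix of \<open>\<sigma> b\<^sub>1, \<sigma> b\<^sub>2\<close> has a 4-cycle in its extension graph.\<close>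

section \<open>Branching of prefix-free families\<close>

lemma prefix_nth: "prefix t xs \<Longrightarrow> i < length t \<Longrightarrow> xs ! i = t ! i"
  by (auto simp: prefix_def nth_append)

lemma strict_prefix_snoc_nth:
  assumes "strict_prefix t xs" shows "prefix (t @ [xs ! length t]) xs"
proof -
  obtain c r where "xs = t @ c # r"
    using assms by (metis append_Nil2 neq_Nil_conv prefix_def strict_prefix_def)
  then show ?thesis by (auto simp: prefix_def)
qed

lemma strict_prefix_snoc_iff: "strict_prefix p (xs @ [x]) \<longleftrightarrow> prefix p xs"
  by (auto simp: strict_prefix_def dest: prefix_length_le)

lemma longest_common_prefix_nth_neq:
  assumes "strict_prefix (longest_common_prefix xs ys) xs"
      and "strict_prefix (longest_common_prefix xs ys) ys"
  shows "xs ! length (longest_common_prefix xs ys) \<noteq> ys ! length (longest_common_prefix xs ys)"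
proof
  let ?t = "longest_common_prefix xs ys"
  assume eq: "xs ! length ?t = ys ! length ?t"
  have "prefix (?t @ [xs ! length ?t]) xs" using assms(1) by (rule strict_prefix_snoc_nth)
  moreover have "prefix (?t @ [xs ! length ?t]) ys" using strict_prefix_snoc_nth[OF assms(2)] eq by simp
  ultimately have "prefix (?t @ [xs ! length ?t]) ?t"
    by (rule longest_common_prefix_max_prefix)
  then show False by (auto dest: prefix_length_le)
qed

lemma card_ge_2_obtain:
  assumes "card S \<ge> 2" obtains x y where "x \<in> S" "y \<in> S" "x \<noteq> y"
proof -
  have "finite S" using assms by (metis card.infinite not_numeral_le_zero)
  then show ?thesis using assms that card_le_Suc0_iff_eq[of S] by force
qed

definition lcp_set :: "'a set \<Rightarrow> ('a \<Rightarrow> 'b list) \<Rightarrow> 'b list set" where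
  "lcp_set A f = {longest_common_prefix (f a1) (f a2) | a1 a2. a1 \<in> A \<and> a2 \<in> A \<and> a1 \<noteq> a2}"

lemma finite_lcp_set: "finite A \<Longrightarrow> finite (lcp_set A f)"
proof -
  assume "finite A"
  moreover have "lcp_set A f \<subseteq> (\<lambda>(a1, a2). longest_common_prefix (f a1) (f a2)) ` (A \<times> A)"
    unfolding lcp_set_def by auto
  ultimately show ?thesis by (meson finite_SigmaI finite_imageI finite_subset)
qed

locale prefix_free =
  fixes A :: "'a set" and f :: "'a \<Rightarrow> 'b list"
  assumes not_prefix: "\<And>a1 a2. a1 \<in> A \<Longrightarrow> a2 \<in> A \<Longrightarrow> a1 \<noteq> a2 \<Longrightarrow> \<not> prefix (f a1) (f a2)"
begin

lemma lcp_strict_prefix1: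
  assumes "a1 \<in> A" "a2 \<in> A" "a1 \<noteq> a2"
  shows "strict_prefix (longest_common_prefix (f a1) (f a2)) (f a1)"
  using not_prefix[OF assms] longest_common_prefix_prefix1[of "f a1" "f a2"]
    longest_common_prefix_prefix2[of "f a1" "f a2"]
  by (metis strict_prefix_def)

lemma lcp_strict_prefix2:
  assumes "a1 \<in> A" "a2 \<in> A" "a1 \<noteq> a2"
  shows "strict_prefix (longest_common_prefix (f a1) (f a2)) (f a2)"
  using not_prefix[OF assms(2,1)] assms(3) longest_common_prefix_prefix1[of "f a1" "f a2"]
    longest_common_prefix_prefix2[of "f a1" "f a2"]
  by (metis strict_prefix_def)

lemma lcp_nth_neq:
  assumes "a1 \<in> A" "a2 \<in> A" "a1 \<noteq> a2"
  shows "f a1 ! length (longest_common_prefix (f a1) (f a2)) \<noteq>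
         f a2 ! length (longest_common_prefix (f a1) (f a2))"
  by (rule longest_common_prefix_nth_neq[OF lcp_strict_prefix1[OF assms] lcp_strict_prefix2[OF assms]])

lemma lcp_set_single_branching:
  assumes single: "card (lcp_set A f) = 1"
    and a: "a1 \<in> A" "a2 \<in> A" "strict_prefix q (f a1)" "strict_prefix q (f a2)"
    and differ: "f a1 ! length q \<noteq> f a2 ! length q"
  shows "(\<forall>a\<in>A. strict_prefix q (f a)) \<and> inj_on (\<lambda>a. f a ! length q) A"
proof -
  have ne: "a1 \<noteq> a2" using differ by auto
  let ?t = "longest_common_prefix (f a1) (f a2)"
  have all: "longest_common_prefix (f b1) (f b2) = ?t"
    if "b1 \<in> A" "b2 \<in> A" "b1 \<noteq> b2" for b1 b2
  proof -
    have "longest_common_prefix (f b1) (f b2) \<in> lcp_set A f" "?t \<in> lcp_set A f"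
      using that a ne unfolding lcp_set_def by blast+
    moreover obtain t where "lcp_set A f = {t}" using single by (rule card_1_singletonE)
    ultimately show ?thesis by simp
  qed
  have "prefix q ?t"
    using a(3,4) by (simp add: longest_common_prefix_max_prefix prefix_order.less_imp_le)
  moreover have "\<not> strict_prefix q ?t"
  proof
    assume "strict_prefix q ?t"
    then have "length q < length ?t" by (rule prefix_length_less)
    then have "f a1 ! length q = ?t ! length q" "f a2 ! length q = ?t ! length q"
      by (simp_all add: prefix_nth longest_common_prefix_prefix1 longest_common_prefix_prefix2)
    then show False using differ by simp
  qed
  ultimately have q: "q = ?t" by (simp add: strict_prefix_def)
  have "strict_prefix q (f a)" if "a \<in> A" for a
  proof -
    obtain a' where "a' \<in> A" "a' \<noteq> a" using a ne by blast
    then show ?thesis using lcp_strict_prefix1[of a a'] all[of a a'] q that by simp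
  qed
  moreover have "inj_on (\<lambda>a. f a ! length q) A"
  proof (rule inj_onI, rule ccontr)
    fix b1 b2 assume "b1 \<in> A" "b2 \<in> A" "f b1 ! length q = f b2 ! length q" "b1 \<noteq> b2"
    then show False using lcp_nth_neq[of b1 b2] all[of b1 b2] q by simp
  qed
  ultimately show ?thesis by blast
qed

lemma shortest_lcp_prefix:
  assumes t0: "t0 \<in> lcp_set A f" and shortest: "\<And>t. t \<in> lcp_set A f \<Longrightarrow> length t0 \<le> length t"
    and z: "z \<in> A"
  shows "prefix t0 (f z)"
proof -
  obtain x y where xy: "x \<in> A" "y \<in> A" "x \<noteq> y" "t0 = longest_common_prefix (f x) (f y)"
    using t0 unfolding lcp_set_def by blast
  show ?thesis
  proof (cases "z = x")
    case True then show ?thesis using xy(4) longest_common_prefix_prefix1 by metis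
  next
    case False
    let ?s = "longest_common_prefix (f x) (f z)"
    have "?s \<in> lcp_set A f" using xy z False unfolding lcp_set_def by blast
    then have "length t0 \<le> length ?s" by (rule shortest)
    then have "prefix t0 ?s" using prefix_length_prefix xy(4) longest_common_prefix_prefix1 by metis
    then show ?thesis using longest_common_prefix_prefix2 prefix_order.trans by metis
  qed
qed

lemma lcp_set_common_prefix:
  assumes fin: "finite A" and two: "card A \<ge> 2"
  shows "\<exists>t0\<in>lcp_set A f. \<forall>a\<in>A. prefix t0 (f a)"
proof -
  have finT: "finite (lcp_set A f)" using fin by (rule finite_lcp_set)
  obtain x y where "x \<in> A" "y \<in> A" "x \<noteq> y" using two by (rule card_ge_2_obtain)
  then have "lcp_set A f \<noteq> {}" unfolding lcp_set_def by blast
  then have "Min (length ` lcp_set A f) \<in> length ` lcp_set A f" using finT by simp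
  then obtain t0 where t0: "t0 \<in> lcp_set A f" and "length t0 = Min (length ` lcp_set A f)" by auto
  then have "\<And>t. t \<in> lcp_set A f \<Longrightarrow> length t0 \<le> length t" using finT by simp
  then show ?thesis using t0 shortest_lcp_prefix[OF t0] by blast
qed

lemma lcp_set_non_single_branching:
  assumes fin: "finite A" and two: "card A \<ge> 2" and not_single: "card (lcp_set A f) \<noteq> 1"
  obtains q a1 a2 a3 where "a1 \<in> A" "a2 \<in> A" "a3 \<in> A" "a1 \<noteq> a2"
    "strict_prefix q (f a1)" "strict_prefix q (f a2)" "strict_prefix q (f a3)"
    "f a1 ! length q = f a2 ! length q" "f a1 ! length q \<noteq> f a3 ! length q"
proof -
  obtain t0 where t0: "t0 \<in> lcp_set A f" and common: "\<forall>a\<in>A. prefix t0 (f a)"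
    using lcp_set_common_prefix[OF fin two] by blast
  obtain t1 where t1: "t1 \<in> lcp_set A f" "t1 \<noteq> t0"
  proof (rule ccontr)
    assume "\<not> thesis"
    then have "lcp_set A f = {t0}" using t0 that by blast
    then show False using not_single by simp
  qed
  obtain x y where xy: "x \<in> A" "y \<in> A" "x \<noteq> y" "t0 = longest_common_prefix (f x) (f y)"
    using t0 unfolding lcp_set_def by blast
  obtain a1 a2 where a12: "a1 \<in> A" "a2 \<in> A" "a1 \<noteq> a2" "t1 = longest_common_prefix (f a1) (f a2)"
    using t1 unfolding lcp_set_def by blast
  have "prefix t0 t1" using a12 common longest_common_prefix_max_prefix by metis
  then have "strict_prefix t0 t1" using t1 by (simp add: strict_prefix_def)
  then have lt: "length t0 < length t1" by (rule prefix_length_less)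
  have p1: "prefix t1 (f a1)" "prefix t1 (f a2)"
    using a12(4) longest_common_prefix_prefix1 longest_common_prefix_prefix2 by metis+
  have s1: "strict_prefix t0 (f a1)" "strict_prefix t0 (f a2)"
    using \<open>strict_prefix t0 t1\<close> p1 prefix_order.less_le_trans by blast+
  have same: "f a1 ! length t0 = f a2 ! length t0"
    using prefix_nth[OF p1(1) lt] prefix_nth[OF p1(2) lt] by simp
  have sx: "strict_prefix t0 (f x)" "strict_prefix t0 (f y)"
    using lcp_strict_prefix1[OF xy(1-3)] lcp_strict_prefix2[OF xy(1-3)] xy(4) by simp_all
  have "f x ! length t0 \<noteq> f y ! length t0" using lcp_nth_neq[OF xy(1-3)] xy(4) by simp
  then consider "f a1 ! length t0 \<noteq> f x ! length t0" | "f a1 ! length t0 \<noteq> f y ! length t0"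
    by metis
  then show ?thesis
  proof cases
    case 1 then show ?thesis using that[OF a12(1,2) xy(1) a12(3) s1 sx(1) same] by blast
  next
    case 2 then show ?thesis using that[OF a12(1,2) xy(2) a12(3) s1 sx(2) same] by blast
  qed
qed

end

section \<open>Images of bi-infinite sequences\<close>

lemma morph_Nil [simp]: "morph \<sigma> [] = []" by (simp add: morph_def)
lemma morph_Cons [simp]: "morph \<sigma> (a # w) = \<sigma> a @ morph \<sigma> w" by (simp add: morph_def)
lemma morph_append [simp]: "morph \<sigma> (v @ w) = morph \<sigma> v @ morph \<sigma> w" by (simp add: morph_def)

lemma length_morph_ge: "(\<And>a. a \<in> set w \<Longrightarrow> \<sigma> a \<noteq> []) \<Longrightarrow> length w \<le> length (morph \<sigma> w)"
  by (induction w) (auto simp: Suc_le_eq intro: le_less_trans)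

definition factor_at :: "(int \<Rightarrow> 'a) \<Rightarrow> int \<Rightarrow> nat \<Rightarrow> 'a list" where
  "factor_at x n K = map (\<lambda>i. x (n + int i)) [0..<K]"

lemma length_factor_at [simp]: "length (factor_at x n K) = K"
  by (simp add: factor_at_def)

lemma factor_at_0 [simp]: "factor_at x n 0 = []"
  by (simp add: factor_at_def)

lemma factor_at_Suc: "factor_at x n (Suc K) = x n # factor_at x (n + 1) K"
proof -
  have "[0..<Suc K] = 0 # map Suc [0..<K]" by (simp add: upt_conv_Cons map_Suc_upt)
  then show ?thesis by (simp add: factor_at_def add.assoc)
qed

lemma factor_at_add: "factor_at x n (K + M) = factor_at x n K @ factor_at x (n + int K) M"
  by (induction K arbitrary: n) (simp_all add: factor_at_Suc add.assoc)

lemma set_factor_at: "set (factor_at x n K) = (\<lambda>i. x (n + int i)) ` {0..<K}"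
  by (simp add: factor_at_def)

lemma lang_iff_factor_at: "w \<in> lang X \<longleftrightarrow> (\<exists>x\<in>X. \<exists>i. w = factor_at x i (length w))"
  by (simp add: lang_def factor_at_def)

lemma factor_at_in_lang: "x \<in> X \<Longrightarrow> factor_at x i K \<in> lang X"
  unfolding lang_iff_factor_at by auto

lemma lang_sublist:
  assumes "sublist u w" "w \<in> lang X" shows "u \<in> lang X"
proof -
  obtain x i where x: "x \<in> X" "w = factor_at x i (length w)"
    using assms(2) unfolding lang_iff_factor_at by blast
  obtain p q where w: "w = p @ u @ q" using assms(1) by (auto simp: sublist_def)
  have "p @ u @ q = factor_at x i (length p) @ factor_at x (i + int (length p)) (length u)
      @ factor_at x (i + int (length p) + int (length u)) (length q)"
    using x(2) w factor_at_add[of x i "length p" "length u + length q"]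
      factor_at_add[of x "i + int (length p)" "length u" "length q"] by simp
  then have "u = factor_at x (i + int (length p)) (length u)"
    by (simp add: append_eq_append_conv)
  then show ?thesis using x(1) factor_at_in_lang by metis
qed

lemma lang_subset_lists:
  assumes "X \<subseteq> UNIV \<rightarrow> A" "w \<in> lang X" shows "w \<in> lists A"
proof -
  obtain x i where x: "x \<in> X" "w = factor_at x i (length w)"
    using assms(2) unfolding lang_iff_factor_at by blast
  have "\<forall>j. x j \<in> A" using assms(1) x(1) by auto
  then have "set (factor_at x i (length w)) \<subseteq> A" by (auto simp: set_factor_at)
  then show ?thesis using x(2) by (simp add: lists_eq_set)
qed

lemma spos_Suc: "spos \<sigma> x (n + 1) = spos \<sigma> x n + int (length (\<sigma> (x n)))"
proof -
  consider "n \<ge> 0" | "n = -1" | "n < -1" by linarith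
  then show ?thesis
  proof cases
    case 1
    then have "{0..<n+1} = insert n {0..<n}" by auto
    then show ?thesis using 1 by (simp add: spos_def)
  next
    case 2
    have "{-1..<0::int} = {-1}" by auto
    then show ?thesis using 2 by (simp add: spos_def)
  next
    case 3
    then have "{n..<0} = insert n {n+1..<0}" by auto
    then show ?thesis using 3 by (simp add: spos_def)
  qed
qed

lemma spos_add: "spos \<sigma> x (n + int K) = spos \<sigma> x n + int (length (morph \<sigma> (factor_at x n K)))"
proof (induction K arbitrary: n)
  case (Suc K)
  have "spos \<sigma> x (n + int (Suc K)) = spos \<sigma> x ((n + 1) + int K)" by (simp add: add.assoc)
  also have "\<dots> = spos \<sigma> x (n + 1) + int (length (morph \<sigma> (factor_at x (n + 1) K)))" by (rule Suc)
  finally show ?case by (simp add: factor_at_Suc spos_Suc)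
qed simp

locale nonerasing_seq =
  fixes \<sigma> :: "'a \<Rightarrow> 'b list" and x :: "int \<Rightarrow> 'a"
  assumes nonerasing: "\<And>i. \<sigma> (x i) \<noteq> []"
begin

lemma length_morph_factor_at: "K \<le> length (morph \<sigma> (factor_at x n K))"
  using length_morph_ge[of "factor_at x n K" \<sigma>] nonerasing by (auto simp: set_factor_at)

lemma spos_strict_mono: "n < n' \<Longrightarrow> spos \<sigma> x n < spos \<sigma> x n'"
proof -
  assume "n < n'"
  then obtain K where K: "n' = n + int K" "K > 0" by (metis zless_iff_Suc_zadd zero_less_Suc)
  have "K \<le> length (morph \<sigma> (factor_at x n K))" by (rule length_morph_factor_at)
  then have "morph \<sigma> (factor_at x n K) \<noteq> []" using K(2) by auto
  then show ?thesis using K(1) spos_add[of \<sigma> x n K] by simp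
qed

lemma spos_unique:
  assumes "spos \<sigma> x n \<le> m" "m < spos \<sigma> x (n + 1)" "spos \<sigma> x n' \<le> m" "m < spos \<sigma> x (n' + 1)"
  shows "n = n'"
proof (rule ccontr)
  assume "n \<noteq> n'"
  then consider "n + 1 \<le> n'" | "n' + 1 \<le> n" by linarith
  then show False
    using assms spos_strict_mono[of "n + 1" n'] spos_strict_mono[of "n' + 1" n] by cases force+
qed

lemma spos_decompose: "\<exists>n. spos \<sigma> x n \<le> m \<and> m < spos \<sigma> x (n + 1)"
proof (induction m rule: int_induct[where k = 0])
  case base
  have "spos \<sigma> x 0 < spos \<sigma> x (0 + 1)" by (rule spos_strict_mono) simp
  then show ?case by (intro exI[of _ 0]) (simp add: spos_def)
next
  case (step1 i)
  then obtain n where n: "spos \<sigma> x n \<le> i" "i < spos \<sigma> x (n + 1)" by blast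
  show ?case
  proof (cases "i + 1 < spos \<sigma> x (n + 1)")
    case True
    then show ?thesis using n by (intro exI[of _ n]) simp
  next
    case False
    have "spos \<sigma> x (n + 1) < spos \<sigma> x (n + 1 + 1)" by (rule spos_strict_mono) simp
    then show ?thesis using n False by (intro exI[of _ "n + 1"]) simp
  qed
next
  case (step2 i)
  then obtain n where n: "spos \<sigma> x n \<le> i" "i < spos \<sigma> x (n + 1)" by blast
  show ?case
  proof (cases "spos \<sigma> x n \<le> i - 1")
    case True
    then show ?thesis using n by auto
  next
    case False
    have "spos \<sigma> x (n - 1) < spos \<sigma> x n" by (rule spos_strict_mono) simp
    then show ?thesis using n False by (intro exI[of _ "n - 1"]) simp
  qed
qed

lemma seq_image_spos:
  assumes "j < length (\<sigma> (x n))"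
  shows "seq_image \<sigma> x (spos \<sigma> x n + int j) = \<sigma> (x n) ! j"
proof -
  let ?m = "spos \<sigma> x n + int j"
  have "spos \<sigma> x n \<le> ?m \<and> ?m < spos \<sigma> x (n + 1)" using assms spos_Suc[of \<sigma> x n] by simp
  then have "(THE n'. spos \<sigma> x n' \<le> ?m \<and> ?m < spos \<sigma> x (n' + 1)) = n"
    using spos_unique by (intro the_equality) blast+
  then show ?thesis unfolding seq_image_def Let_def by simp
qed

lemma seq_image_spos_factor_at:
  "j < length (morph \<sigma> (factor_at x n K)) \<Longrightarrow>
   seq_image \<sigma> x (spos \<sigma> x n + int j) = morph \<sigma> (factor_at x n K) ! j"
proof (induction K arbitrary: n j)
  case (Suc K)
  show ?case
  proof (cases "j < length (\<sigma> (x n))")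
    case True
    then show ?thesis using seq_image_spos[OF True] by (simp add: factor_at_Suc nth_append)
  next
    case False
    define j' where "j' = j - length (\<sigma> (x n))"
    have j: "j = length (\<sigma> (x n)) + j'" using False j'_def by simp
    have "j' < length (morph \<sigma> (factor_at x (n + 1) K))" using Suc.prems j by (simp add: factor_at_Suc)
    then have "seq_image \<sigma> x (spos \<sigma> x (n + 1) + int j') = morph \<sigma> (factor_at x (n + 1) K) ! j'"
      by (rule Suc.IH)
    then show ?thesis using j spos_Suc[of \<sigma> x n] by (simp add: factor_at_Suc nth_append add.assoc)
  qed
qed simp

end

lemma sublist_morph_in_lang_shift_image:
  assumes x: "x \<in> X" and nonerasing: "\<And>i. \<sigma> (x i) \<noteq> []"
    and u: "sublist u (morph \<sigma> (factor_at x n K))"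
  shows "u \<in> lang (shift_image \<sigma> X)"
proof -
  interpret nonerasing_seq \<sigma> x by (standard, rule nonerasing)
  define W where "W = morph \<sigma> (factor_at x n K)"
  obtain p q where W: "W = p @ u @ q" using u unfolding W_def sublist_def by blast
  define y where "y = (\<lambda>i. seq_image \<sigma> x (i + int 0))"
  have "y \<in> shift_image \<sigma> X"
    unfolding shift_image_def y_def using x nonerasing by blast
  moreover have "u = map (\<lambda>t. y (spos \<sigma> x n + int (length p) + int t)) [0..<length u]"
  proof (rule nth_equalityI)
    fix t assume "t < length u"
    then have "u ! t = W ! (length p + t)" using W by (simp add: nth_append)
    also have "\<dots> = seq_image \<sigma> x (spos \<sigma> x n + int (length p + t))"
      using \<open>t < length u\<close> W unfolding W_def by (intro seq_image_spos_factor_at[symmetric]) simp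
    finally show "u ! t = map (\<lambda>t. y (spos \<sigma> x n + int (length p) + int t)) [0..<length u] ! t"
      using \<open>t < length u\<close> by (simp add: y_def add.assoc)
  qed simp
  ultimately show ?thesis unfolding lang_def by blast
qed

lemma lang_shift_image_obtain:
  assumes u: "u \<in> lang (shift_image \<sigma> X)" and nonerasing: "\<And>x i. x \<in> X \<Longrightarrow> \<sigma> (x i) \<noteq> []"
  obtains x n j where "x \<in> X" "j < length (\<sigma> (x n))"
    "prefix u (drop j (morph \<sigma> (factor_at x n (Suc (length u)))))"
proof -
  define L where "L = length u"
  obtain y i where y: "y \<in> shift_image \<sigma> X" and uy: "u = map (\<lambda>t. y (i + int t)) [0..<L]"
    using u unfolding L_def lang_def by blast
  obtain x k where x: "x \<in> X" and yx: "y = (\<lambda>i. seq_image \<sigma> x (i + int k))"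
    using y unfolding shift_image_def by blast
  interpret nonerasing_seq \<sigma> x by (standard, rule nonerasing[OF x])
  obtain n where n: "spos \<sigma> x n \<le> i + int k" "i + int k < spos \<sigma> x (n + 1)"
    using spos_decompose by blast
  define j where "j = nat (i + int k - spos \<sigma> x n)"
  have j: "j < length (\<sigma> (x n))" "i + int k = spos \<sigma> x n + int j"
    using n spos_Suc[of \<sigma> x n] unfolding j_def by simp_all
  define W where "W = morph \<sigma> (factor_at x n (Suc L))"
  have W: "W = \<sigma> (x n) @ morph \<sigma> (factor_at x (n + 1) L)"
    unfolding W_def by (simp add: factor_at_Suc)
  then have lenW: "j + L < length W" using j(1) length_morph_factor_at[of L "n + 1"] by simp
  have "u = take L (drop j W)"
  proof (rule nth_equalityI)
    fix t assume "t < length u"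
    then have t: "t < L" by (simp add: L_def)
    have pos: "i + int k + int t = spos \<sigma> x n + int (j + t)" using j(2) by simp
    have "u ! t = seq_image \<sigma> x (i + int k + int t)"
      using uy yx t by (simp add: algebra_simps)
    also have "\<dots> = W ! (j + t)"
      unfolding pos using lenW t unfolding W_def by (intro seq_image_spos_factor_at) simp
    finally show "u ! t = take L (drop j W) ! t" using lenW t by simp
  qed (use lenW L_def in simp)
  then have "prefix u (drop j W)" by (metis take_is_prefix)
  then show ?thesis using that x j(1) unfolding W_def L_def by blast
qed

section \<open>Extensions of extended images\<close>

lemma prefix_marker_cancel:
  assumes "m \<notin> set s" "m \<notin> set r" "prefix (s @ m # z) (r @ m # y)"
  shows "s = r"
  using assms
proof (induction s arbitrary: r)
  case Nil
  then show ?case by (cases r) auto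
next
  case (Cons a s)
  then obtain r' where r: "r = a # r'" by (cases r) auto
  then show ?case using Cons.IH[of r'] Cons.prems by simp
qed

lemma prefix_snoc_marker:
  assumes p: "p \<noteq> []" "m \<notin> set (tl p)" and u: "u \<noteq> []" and E: "E \<noteq> []" "hd E = m"
    and pre: "prefix (p @ [d]) (u @ E)"
  shows "prefix p u \<and> d = (u @ [m]) ! length p"
proof -
  have uE: "(u @ E) ! length u = m" using E by (simp add: nth_append hd_conv_nth)
  have le: "length p \<le> length u"
  proof (rule ccontr)
    assume "\<not> length p \<le> length u"
    then have long: "length u < length p" by simp
    obtain p0 p' where p0: "p = p0 # p'" using p(1) by (cases p) auto
    have "p ! length u = m" using prefix_nth[OF pre, of "length u"] long uE by (simp add: nth_append)
    moreover have "length u - 1 < length p'" using long u p0 by (cases u) auto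
    moreover have "p ! length u = p' ! (length u - 1)" using u p0 by (cases u) auto
    ultimately have "m \<in> set p'" using nth_mem by metis
    then show False using p(2) p0 by simp
  qed
  have "prefix p (u @ E)" using pre by (rule append_prefixD)
  then have "prefix p u" using prefix_length_prefix[of p "u @ E" u] le by simp
  moreover have d: "d = (u @ E) ! length p" using prefix_nth[OF pre, of "length p"] by simp
  have "d = (u @ [m]) ! length p"
  proof (cases "length p < length u")
    case True then show ?thesis using d by (simp add: nth_append)
  next
    case False then show ?thesis using d le uE by simp
  qed
  ultimately show ?thesis by blast
qed

lemma strict_suffix_split: "strict_suffix s w \<Longrightarrow> \<exists>r. w = r @ (rev w ! length s) # s"
proof -
  assume "strict_suffix s w"
  then obtain r where r: "w = r @ s" "r \<noteq> []" by (auto simp: strict_suffix_def suffix_def)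
  then have "rev w ! length s = last r" by (simp add: nth_append rev_nth last_conv_nth)
  moreover have "w = butlast r @ last r # s" using r by simp
  ultimately show ?thesis by auto
qed

lemma drop_eq_Cons_strict_suffix:
  assumes "drop j w = c # s" shows "strict_suffix s w" "rev w ! length s = c"
proof -
  have w: "w = take j w @ c # s" using assms append_take_drop_id[of j w] by simp
  then have "suffix (c # s) w" unfolding suffix_def by blast
  then show "strict_suffix s w" by (rule suffix_ConsD')
  show "rev w ! length s = c" by (subst w) (simp add: nth_append)
qed

locale strongly_left_proper_morphism =
  fixes A :: "'a set" and \<sigma> :: "'a \<Rightarrow> 'b list" and l :: 'b
  assumes strongly_left_proper: "strongly_left_proper A \<sigma> l"
    and inj_image: "inj_on \<sigma> A"
begin

lemma image_marker:
  assumes "a \<in> A" obtains r where "\<sigma> a = l # r" "l \<notin> set r"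
proof -
  have "\<sigma> a \<noteq> []" "hd (\<sigma> a) = l" "count_list (\<sigma> a) l = 1"
    using strongly_left_proper assms by (simp_all add: strongly_left_proper_def)
  then show ?thesis using that by (cases "\<sigma> a") (auto simp: count_list_0_iff)
qed

lemma image_not_Nil: "a \<in> A \<Longrightarrow> \<sigma> a \<noteq> []"
  using strongly_left_proper by (simp add: strongly_left_proper_def)

lemma nth_image_eq_marker:
  assumes "a \<in> A" "j < length (\<sigma> a)" "\<sigma> a ! j = l" shows "j = 0"
proof (rule ccontr)
  assume "j \<noteq> 0"
  obtain r where r: "\<sigma> a = l # r" "l \<notin> set r" using assms(1) by (rule image_marker)
  then have "r ! (j - 1) = l" "j - 1 < length r" using assms(2,3) \<open>j \<noteq> 0\<close> by (simp_all add: nth_Cons')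
  then show False using r(2) nth_mem by metis
qed

lemma hd_morph_append_marker: "v \<in> lists A \<Longrightarrow> hd (morph \<sigma> v @ l # r) = l"
proof (cases v)
  case (Cons a v')
  moreover assume "v \<in> lists A"
  ultimately have "a \<in> A" by simp
  then obtain r' where "\<sigma> a = l # r'" by (rule image_marker)
  then show ?thesis using Cons by simp
qed simp

lemma marker_notin_strict_suffix:
  assumes "a \<in> A" "strict_suffix s (\<sigma> a)" shows "l \<notin> set s"
proof -
  obtain r where r: "\<sigma> a = l # r" "l \<notin> set r" using assms(1) by (rule image_marker)
  obtain t where "\<sigma> a = t @ s" "t \<noteq> []" using assms(2) by (auto simp: strict_suffix_def suffix_def)
  then have "suffix s r" using r(1) by (cases t) (auto simp: suffix_def)
  then show ?thesis using r(2) set_mono_suffix by blast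
qed

lemma prefix_image_marker:
  assumes "b \<in> A" "prefix p (\<sigma> b)" "p \<noteq> []" shows "hd p = l" "l \<notin> set (tl p)"
proof -
  obtain r where r: "\<sigma> b = l # r" "l \<notin> set r" using assms(1) by (rule image_marker)
  obtain p' where p': "p = l # p'" "prefix p' r"
    using assms(2,3) r(1) by (cases p) auto
  then show "hd p = l" "l \<notin> set (tl p)" using r(2) set_mono_prefix by auto
qed

lemma morph_prefix_cancel:
  "v \<in> lists A \<Longrightarrow> ws \<in> lists A \<Longrightarrow> prefix (morph \<sigma> v @ [l]) (morph \<sigma> ws @ [l]) \<Longrightarrow> \<exists>w. ws = v @ w"
proof (induction v arbitrary: ws)
  case (Cons a v)
  then have a: "a \<in> A" and v: "v \<in> lists A" by auto
  obtain a' ws' where ws: "ws = a' # ws'"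
    using Cons.prems image_not_Nil[OF a] by (cases ws) (auto dest: prefix_length_le)
  with Cons.prems have a': "a' \<in> A" and ws': "ws' \<in> lists A" by auto
  let ?L = "\<sigma> a @ morph \<sigma> v @ [l]" and ?R = "\<sigma> a' @ morph \<sigma> ws' @ [l]"
  have pre: "prefix ?L ?R" using Cons.prems(3) ws by simp
  have marker: "(morph \<sigma> u @ [l]) ! 0 = l" if "u \<in> lists A" for u
    using hd_morph_append_marker[OF that, of "[]"] by (simp add: hd_conv_nth)
  have "length (\<sigma> a) = length (\<sigma> a')"
  proof (rule ccontr)
    assume "length (\<sigma> a) \<noteq> length (\<sigma> a')"
    then consider "length (\<sigma> a) < length (\<sigma> a')" | "length (\<sigma> a') < length (\<sigma> a)" by linarith
    then show False
    proof cases
      case 1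
      then have "\<sigma> a' ! length (\<sigma> a) = l"
        using prefix_nth[OF pre, of "length (\<sigma> a)"] marker[OF v] by (simp add: nth_append)
      then show False using nth_image_eq_marker[OF a' 1] image_not_Nil[OF a] by simp
    next
      case 2
      then have "\<sigma> a ! length (\<sigma> a') = l"
        using prefix_nth[OF pre, of "length (\<sigma> a')"] marker[OF ws'] by (simp add: nth_append)
      then show False using nth_image_eq_marker[OF a 2] image_not_Nil[OF a'] by simp
    qed
  qed
  then have "\<sigma> a = \<sigma> a'" using pre by (auto simp: prefix_def)
  then have "a = a'" using inj_image a a' by (meson inj_onD)
  then obtain w where "ws' = v @ w" using Cons.IH[OF v ws'] pre by auto
  then show ?case using ws \<open>a = a'\<close> by simp
qed simp

definition left_letter :: "'b list \<Rightarrow> 'a \<Rightarrow> 'b" where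
  "left_letter s a = rev (\<sigma> a) ! length s"

text \<open>Since every image starts with \<open>l\<close>, \<open>right_letter p b\<close> is the letter following \<open>p\<close> in
  \<open>\<sigma> b\<close> followed by the image of any letter.\<close>
definition right_letter :: "'b list \<Rightarrow> 'a \<Rightarrow> 'b" where
  "right_letter p b = (\<sigma> b @ [l]) ! length p"

lemma right_letter_Nil: "b \<in> A \<Longrightarrow> right_letter [] b = l"
  unfolding right_letter_def by (erule image_marker) simp

lemma prefix_right_letter:
  assumes "prefix p (\<sigma> b)" "e \<in> A" shows "prefix (p @ [right_letter p b]) (\<sigma> b @ \<sigma> e)"
proof -
  obtain q where q: "\<sigma> b = p @ q" using assms(1) by (auto simp: prefix_def)
  obtain r where "\<sigma> e = l # r" using assms(2) by (rule image_marker)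
  then show ?thesis using q by (cases q) (simp_all add: right_letter_def nth_append)
qed

lemma Ext_image_intro:
  assumes X: "X \<subseteq> UNIV \<rightarrow> A" and ext: "(a, b) \<in> Ext X v"
    and s: "strict_suffix s (\<sigma> a)" and p: "prefix p (\<sigma> b)"
  shows "(left_letter s a, right_letter p b) \<in> Ext (shift_image \<sigma> X) (s @ morph \<sigma> v @ p)"
proof -
  obtain x i where x: "x \<in> X" and xi: "a # v @ [b] = factor_at x i (length v + 2)"
    using ext unfolding Ext_def lang_iff_factor_at by auto
  have xA: "x j \<in> A" for j using X x by auto
  define e where "e = x (i + int (length v + 2))"
  have "factor_at x i (length v + 3) = a # v @ [b, e]"
    using factor_at_add[of x i "length v + 2" 1] xi by (simp add: e_def numeral_3_eq_3 factor_at_Suc)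
  then have W: "morph \<sigma> (factor_at x i (length v + 3)) = \<sigma> a @ morph \<sigma> v @ \<sigma> b @ \<sigma> e" by simp
  obtain r where r: "\<sigma> a = r @ left_letter s a # s"
    using strict_suffix_split[OF s] unfolding left_letter_def by blast
  obtain q where "\<sigma> b @ \<sigma> e = (p @ [right_letter p b]) @ q"
    using prefix_right_letter[OF p xA] unfolding e_def by (auto simp: prefix_def)
  then have "morph \<sigma> (factor_at x i (length v + 3))
      = r @ (left_letter s a # s @ morph \<sigma> v @ p @ [right_letter p b]) @ q"
    unfolding W by (subst r) simp
  then have "sublist (left_letter s a # s @ morph \<sigma> v @ p @ [right_letter p b])
      (morph \<sigma> (factor_at x i (length v + 3)))"
    by (metis sublist_appendI)
  then show ?thesis
    unfolding Ext_def using sublist_morph_in_lang_shift_image[of x X \<sigma>] x image_not_Nil[OF xA] by simp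
qed

lemma drop_image_eq_if_prefix:
  assumes "a \<in> A" "l \<notin> set s" "prefix (c # s @ l # z) (drop j (\<sigma> a) @ l # y)"
    and "j < length (\<sigma> a)"
  shows "drop j (\<sigma> a) = c # s"
proof -
  obtain r where r: "\<sigma> a = l # r" "l \<notin> set r" using assms(1) by (rule image_marker)
  obtain c' r' where cr: "drop j (\<sigma> a) = c' # r'" using assms(4) by (cases "drop j (\<sigma> a)") auto
  then have "r' = drop j r" using r(1) tl_drop[of j "\<sigma> a"] by simp
  then have "l \<notin> set r'" using r(2) in_set_dropD by metis
  then show ?thesis using prefix_marker_cancel[of l s r' z y] assms(2,3) cr by simp
qed

lemma morph_prefix_right_letter:
  assumes v: "v \<in> lists A" and ws: "ws \<in> lists A" "length v + 2 \<le> length ws"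
    and p: "p \<noteq> []" "hd p = l" "l \<notin> set (tl p)" and pre: "prefix (morph \<sigma> v @ p @ [d]) (morph \<sigma> ws)"
  obtains b rest where "ws = v @ b # rest" "prefix p (\<sigma> b)" "d = right_letter p b"
proof -
  have "prefix (morph \<sigma> v @ [l]) (morph \<sigma> v @ p @ [d])" using p by (cases p) auto
  then have "prefix (morph \<sigma> v @ [l]) (morph \<sigma> ws @ [l])" using pre by (meson prefix_order.trans prefixI)
  then obtain w where w: "ws = v @ w" using morph_prefix_cancel v ws(1) by blast
  moreover have "2 \<le> length w" using ws(2) w by simp
  ultimately obtain b e rest where w: "ws = v @ b # e # rest"
    by (auto simp: numeral_2_eq_2 Suc_le_length_iff)
  have b: "b \<in> A" and e: "e \<in> A" using ws(1) w by auto
  obtain r where "\<sigma> e = l # r" using e by (rule image_marker)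
  then have E: "\<sigma> e @ morph \<sigma> rest \<noteq> []" "hd (\<sigma> e @ morph \<sigma> rest) = l" by simp_all
  have "prefix (p @ [d]) (\<sigma> b @ (\<sigma> e @ morph \<sigma> rest))" using pre w by simp
  then have "prefix p (\<sigma> b) \<and> d = right_letter p b"
    unfolding right_letter_def by (rule prefix_snoc_marker[OF p(1,3) image_not_Nil[OF b] E])
  then show ?thesis using that w by blast
qed

text \<open>The marker at position \<open>length s + 1\<close> of the factor starts the image of a letter, which
  aligns the factor with the images of the letters of the underlying sequence.\<close>
lemma Ext_image_elim:
  assumes X: "X \<subseteq> UNIV \<rightarrow> A" and s: "l \<notin> set s" and p: "p \<noteq> []" "hd p = l" "l \<notin> set (tl p)"
    and v: "v \<in> lists A" and ext: "(c, d) \<in> Ext (shift_image \<sigma> X) (s @ morph \<sigma> v @ p)"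
  obtains a b where "(a, b) \<in> Ext X v" "strict_suffix s (\<sigma> a)" "prefix p (\<sigma> b)"
    "c = left_letter s a" "d = right_letter p b"
proof -
  define u where "u = c # s @ morph \<sigma> v @ p @ [d]"
  have xA: "x \<in> X \<Longrightarrow> x i \<in> A" for x i using X by auto
  have "u \<in> lang (shift_image \<sigma> X)" using ext unfolding u_def Ext_def by simp
  then obtain x n j where x: "x \<in> X" and j: "j < length (\<sigma> (x n))"
    and pre: "prefix u (drop j (morph \<sigma> (factor_at x n (Suc (length u)))))"
    by (rule lang_shift_image_obtain[OF _ image_not_Nil[OF xA]])
  define ws where "ws = factor_at x (n + 1) (length u)"
  have ws: "ws \<in> lists A" "length v + 2 \<le> length ws"
    using xA[OF x] length_morph_ge[of v \<sigma>] image_not_Nil v by (auto simp: ws_def u_def set_factor_at)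
  have split: "drop j (morph \<sigma> (factor_at x n (Suc (length u)))) = drop j (\<sigma> (x n)) @ morph \<sigma> ws"
    using j by (simp add: ws_def factor_at_Suc)
  obtain w0 ws' where ws': "ws = w0 # ws'" using ws(2) by (cases ws) auto
  then obtain r where "\<sigma> w0 = l # r" using image_marker[of w0] ws(1) by auto
  then have y: "morph \<sigma> ws = l # r @ morph \<sigma> ws'" using ws' by simp
  obtain p' where p': "p = l # p'" using p(1,2) by (cases p) auto
  define z where "z = tl (morph \<sigma> v @ p @ [d])"
  have z: "morph \<sigma> v @ p @ [d] = l # z"
    using hd_morph_append_marker[OF v, of "p' @ [d]"] unfolding z_def p' by (cases "morph \<sigma> v") auto
  have "prefix (c # s @ l # z) (drop j (\<sigma> (x n)) @ l # r @ morph \<sigma> ws')"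
    using pre split y z unfolding u_def by simp
  then have left: "drop j (\<sigma> (x n)) = c # s" by (rule drop_image_eq_if_prefix[OF xA[OF x] s _ j])
  then have right: "prefix (morph \<sigma> v @ p @ [d]) (morph \<sigma> ws)"
    using pre split unfolding u_def by simp
  obtain b rest where b: "ws = v @ b # rest" "prefix p (\<sigma> b)" "d = right_letter p b"
    using morph_prefix_right_letter[OF v ws p right] by blast
  have "prefix (x n # v @ [b]) (factor_at x n (Suc (length u)))"
    using b(1) by (simp add: ws_def factor_at_Suc)
  then have "(x n, b) \<in> Ext X v"
    unfolding Ext_def using lang_sublist factor_at_in_lang[OF x] by blast
  then show ?thesis
    using that b(2,3) drop_eq_Cons_strict_suffix[OF left] unfolding left_letter_def by blast
qed

lemma Ext_shift_image:
  assumes X: "X \<subseteq> UNIV \<rightarrow> A" and a0: "a0 \<in> A" "strict_suffix s (\<sigma> a0)"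
    and b0: "b0 \<in> A" "prefix p (\<sigma> b0)" "p \<noteq> []" and v: "v \<in> lists A"
  shows "Ext (shift_image \<sigma> X) (s @ morph \<sigma> v @ p) = map_prod (left_letter s) (right_letter p) `
    {(a, b) \<in> Ext X v. strict_suffix s (\<sigma> a) \<and> prefix p (\<sigma> b)}"
proof (intro set_eqI iffI)
  fix cd assume cd: "cd \<in> Ext (shift_image \<sigma> X) (s @ morph \<sigma> v @ p)"
  obtain c d where "cd = (c, d)" by fastforce
  with cd obtain a b where "(a, b) \<in> Ext X v" "strict_suffix s (\<sigma> a)" "prefix p (\<sigma> b)"
    "c = left_letter s a" "d = right_letter p b"
    using Ext_image_elim[OF X marker_notin_strict_suffix[OF a0] b0(3) prefix_image_marker[OF b0] v]
    by blast
  then show "cd \<in> map_prod (left_letter s) (right_letter p) `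
      {(a, b) \<in> Ext X v. strict_suffix s (\<sigma> a) \<and> prefix p (\<sigma> b)}"
    using \<open>cd = (c, d)\<close> by (intro image_eqI[of _ _ "(a, b)"]) simp_all
next
  fix cd assume "cd \<in> map_prod (left_letter s) (right_letter p) `
      {(a, b) \<in> Ext X v. strict_suffix s (\<sigma> a) \<and> prefix p (\<sigma> b)}"
  then obtain a b where "cd = (left_letter s a, right_letter p b)" "(a, b) \<in> Ext X v"
    "strict_suffix s (\<sigma> a)" "prefix p (\<sigma> b)" by auto
  then show "cd \<in> Ext (shift_image \<sigma> X) (s @ morph \<sigma> v @ p)" using Ext_image_intro[OF X] by simp
qed

lemma extended_image_intro:
  assumes u: "u = s @ morph \<sigma> v @ p" "u \<in> lang (shift_image \<sigma> X)" and ext: "(a, b) \<in> Ext X v"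
    and "b \<in> A" "strict_suffix s (\<sigma> a)" "prefix p (\<sigma> b)" "p \<noteq> []"
  shows "extended_image \<sigma> l X u v"
proof -
  have "hd p = l" using prefix_image_marker assms(4,6,7) by blast
  then have "l \<in> set u" using hd_in_set[OF \<open>p \<noteq> []\<close>] u(1) by simp
  moreover have "v \<in> lang X"
    using ext lang_sublist[OF sublist_appendI[of v "[a]" "[b]"]] unfolding Ext_def by simp
  ultimately show ?thesis unfolding extended_image_def using assms by blast
qed

end

section \<open>Extension graphs\<close>

lemma Eminus_eq_fst_Ext: "Eminus X w = fst ` Ext X w"
proof (intro set_eqI iffI)
  fix a assume "a \<in> Eminus X w"
  then obtain x i where x: "x \<in> X" "a # w = factor_at x i (length w + 1)"
    by (auto simp: Eminus_def lang_iff_factor_at)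
  define b where "b = x (i + int (length w + 1))"
  have "a # w @ [b] = factor_at x i (length w + 1 + 1)"
    using x(2) factor_at_add[of x i "length w + 1" 1] by (simp add: factor_at_Suc b_def)
  then have "(a, b) \<in> Ext X w" unfolding Ext_def using factor_at_in_lang[OF x(1)] by simp
  then show "a \<in> fst ` Ext X w" by force
next
  fix a assume "a \<in> fst ` Ext X w"
  then obtain b where "(a # w) @ [b] \<in> lang X" by (auto simp: Ext_def)
  then have "a # w \<in> lang X" by (rule lang_sublist[rotated]) simp
  then show "a \<in> Eminus X w" unfolding Eminus_def by simp
qed

lemma Eplus_eq_snd_Ext: "Eplus X w = snd ` Ext X w"
proof (intro set_eqI iffI)
  fix b assume "b \<in> Eplus X w"
  then obtain x i where x: "x \<in> X" "w @ [b] = factor_at x i (length w + 1)"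
    by (auto simp: Eplus_def lang_iff_factor_at)
  then have "x (i - 1) # w @ [b] = factor_at x (i - 1) (Suc (length w + 1))"
    by (simp only: factor_at_Suc) simp
  then have "(x (i - 1), b) \<in> Ext X w" unfolding Ext_def using factor_at_in_lang[OF x(1)] by simp
  then show "b \<in> snd ` Ext X w" by force
next
  fix b assume "b \<in> snd ` Ext X w"
  then obtain a where "[a] @ (w @ [b]) \<in> lang X" by (auto simp: Ext_def)
  then have "w @ [b] \<in> lang X" by (rule lang_sublist[rotated]) (rule sublist_append_leftI)
  then show "b \<in> Eplus X w" unfolding Eplus_def by simp
qed

lemma Ext_in_alphabet:
  "X \<subseteq> UNIV \<rightarrow> A \<Longrightarrow> (a, b) \<in> Ext X v \<Longrightarrow> a \<in> A \<and> b \<in> A \<and> v \<in> lists A"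
  using lang_subset_lists[of X A "a # v @ [b]"] by (simp add: Ext_def)

lemma ext_graph_adj_simps:
  "ext_graph_adj X w (Inl a) (Inr b) \<longleftrightarrow> (a, b) \<in> Ext X w"
  "ext_graph_adj X w (Inr b) (Inl a) \<longleftrightarrow> (a, b) \<in> Ext X w"
  "\<not> ext_graph_adj X w (Inl a) (Inl a')"
  "\<not> ext_graph_adj X w (Inr b) (Inr b')"
  unfolding ext_graph_adj_def by auto

lemma rtrancl_graph_image:
  assumes "(x, y) \<in> {(u, v). u \<in> V \<and> v \<in> V \<and> E u v}\<^sup>*"
    and "\<And>p q. p \<in> V \<Longrightarrow> q \<in> V \<Longrightarrow> E p q \<Longrightarrow> E' (F p) (F q)"
  shows "(F x, F y) \<in> {(u, v). u \<in> F ` V \<and> v \<in> F ` V \<and> E' u v}\<^sup>*"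
  using assms(1)
proof (induction rule: rtrancl_induct)
  case base then show ?case by simp
next
  case (step y z)
  then show ?case using assms(2) by (auto intro: rtrancl_into_rtrancl)
qed

lemma graph_connected_image:
  assumes adj: "\<And>p q. p \<in> V \<Longrightarrow> q \<in> V \<Longrightarrow> E p q \<Longrightarrow> E' (F p) (F q)"
    and "graph_connected V E"
  shows "graph_connected (F ` V) E'"
  using assms(2) rtrancl_graph_image[where E = E and E' = E' and F = F and V = V] adj
  unfolding graph_connected_def by blast

lemma graph_acyclic_inj_image:
  assumes inj: "inj_on F V" and adj: "\<And>p q. p \<in> V \<Longrightarrow> q \<in> V \<Longrightarrow> E' (F p) (F q) \<Longrightarrow> E p q"
    and acyclic: "graph_acyclic V E"
  shows "graph_acyclic (F ` V) E'"
  unfolding graph_acyclic_def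
proof
  assume "\<exists>cs. 3 \<le> length cs \<and> distinct cs \<and> set cs \<subseteq> F ` V \<and>
    (\<forall>i<length cs. E' (cs ! i) (cs ! ((i + 1) mod length cs)))"
  then obtain cs where cs: "3 \<le> length cs" "distinct cs" "set cs \<subseteq> F ` V"
    "\<forall>i<length cs. E' (cs ! i) (cs ! ((i + 1) mod length cs))" by blast
  define G where "G = inv_into V F"
  define ds where "ds = map G cs"
  have GV: "\<And>y. y \<in> F ` V \<Longrightarrow> G y \<in> V" unfolding G_def by (rule inv_into_into)
  have FG: "\<And>y. y \<in> F ` V \<Longrightarrow> F (G y) = y" unfolding G_def by (rule f_inv_into_f)
  have "inj_on G (F ` V)" unfolding G_def by (rule inj_on_inv_into) simp
  then have "distinct ds" using cs(2,3) unfolding ds_def by (simp add: distinct_map inj_on_subset)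
  moreover have "set ds \<subseteq> V" using cs(3) GV unfolding ds_def by auto
  moreover have "E (ds ! i) (ds ! ((i + 1) mod length ds))" if i: "i < length ds" for i
  proof -
    have l: "length ds = length cs" by (simp add: ds_def)
    have i2: "(i + 1) mod length cs < length cs" using cs(1) by (intro mod_less_divisor) auto
    have m1: "cs ! i \<in> F ` V" using cs(3) i l by (metis nth_mem subsetD)
    have m2: "cs ! ((i + 1) mod length cs) \<in> F ` V" using cs(3) i2 by (metis nth_mem subsetD)
    have "E' (F (G (cs ! i))) (F (G (cs ! ((i + 1) mod length cs))))" using cs(4) i l FG m1 m2 by simp
    then have "E (G (cs ! i)) (G (cs ! ((i + 1) mod length cs)))" using adj GV m1 m2 by blast
    then show ?thesis using i i2 l by (simp add: ds_def)
  qed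
  moreover have "3 \<le> length ds" using cs(1) by (simp add: ds_def)
  ultimately show False using acyclic unfolding graph_acyclic_def by blast
qed

lemma is_tree_inj_image:
  assumes "inj_on F V" "\<And>p q. p \<in> V \<Longrightarrow> q \<in> V \<Longrightarrow> E' (F p) (F q) \<longleftrightarrow> E p q" "is_tree V E"
  shows "is_tree (F ` V) E'"
  using assms graph_connected_image[of V E E' F] graph_acyclic_inj_image[of F V E' E]
  unfolding is_tree_def by blast

lemma cycle_two_neighbours:
  assumes sym: "\<And>u v. E u v \<Longrightarrow> E v u"
    and cs: "3 \<le> length cs" "distinct cs" "\<forall>i<length cs. E (cs ! i) (cs ! ((i + 1) mod length cs))"
    and v: "v \<in> set cs"
  shows "\<exists>u1\<in>set cs. \<exists>u2\<in>set cs. u1 \<noteq> u2 \<and> E v u1 \<and> E v u2"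
proof -
  let ?n = "length cs"
  obtain i where i: "i < ?n" "cs ! i = v" using v by (metis in_set_conv_nth)
  define j where "j = (i + ?n - 1) mod ?n"
  have j: "j < ?n" using cs(1) unfolding j_def by (intro mod_less_divisor) auto
  have ji: "(j + 1) mod ?n = i"
  proof -
    have "(j + 1) mod ?n = ((i + ?n - 1) + 1) mod ?n" unfolding j_def by (simp add: mod_Suc_eq)
    also have "(i + ?n - 1) + 1 = i + ?n" using cs(1) by simp
    finally show ?thesis using i by simp
  qed
  have e1: "E v (cs ! ((i + 1) mod ?n))" using cs(3) i by auto
  have e2: "E v (cs ! j)" using cs(3) j ji i sym by metis
  have ne: "(i + 1) mod ?n \<noteq> j"
  proof
    assume h: "(i + 1) mod ?n = j"
    have "(i + 2) mod ?n = ((i + 1) mod ?n + 1) mod ?n" by (simp add: mod_Suc_eq)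
    then have "(i + 2) mod ?n = i mod ?n" using h ji i by simp
    then have "?n dvd (i + 2) - i" using mod_eq_dvd_iff_nat[of i "i + 2" ?n] by simp
    then have "?n dvd 2" by simp
    then have "?n \<le> 2" by (rule dvd_imp_le) simp
    then show False using cs(1) by simp
  qed
  have i1: "(i + 1) mod ?n < ?n" using cs(1) by (intro mod_less_divisor) auto
  have "cs ! ((i + 1) mod ?n) \<noteq> cs ! j" using ne nth_eq_iff_index_eq[OF cs(2) i1 j] by simp
  then show ?thesis using e1 e2 j cs(1) by (metis nth_mem mod_less_divisor less_le_trans zero_less_numeral le_trans)
qed

lemma dendric_if_Ext_inj_image:
  assumes Ext: "Ext Y u = map_prod c d ` Ext X v"
    and c: "inj_on c (Eminus X v)" and d: "inj_on d (Eplus X v)"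
    and dendric: "dendric X v" and u: "u \<in> lang Y"
  shows "dendric Y u"
proof -
  define V where "V = ext_graph_vertices X v"
  have left: "a \<in> Eminus X v" if "Inl a \<in> V" for a using that unfolding V_def ext_graph_vertices_def by auto
  have right: "b \<in> Eplus X v" if "Inr b \<in> V" for b using that unfolding V_def ext_graph_vertices_def by auto
  have "Eminus Y u = c ` Eminus X v" "Eplus Y u = d ` Eplus X v"
    unfolding Eminus_eq_fst_Ext Eplus_eq_snd_Ext Ext by (simp_all add: image_image)
  then have V': "ext_graph_vertices Y u = map_sum c d ` V"
    unfolding V_def ext_graph_vertices_def by (simp add: image_Un image_image)
  have "inj_on (map_sum c d) V"
  proof (rule inj_onI)
    fix x y assume "x \<in> V" "y \<in> V" "map_sum c d x = map_sum c d y"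
    then show "x = y" using c d left right by (cases x; cases y) (simp_all add: inj_on_eq_iff)
  qed
  moreover have "ext_graph_adj Y u (map_sum c d p) (map_sum c d q) \<longleftrightarrow> ext_graph_adj X v p q"
    if "p \<in> V" "q \<in> V" for p q
  proof -
    have key: "(c a, d b) \<in> Ext Y u \<longleftrightarrow> (a, b) \<in> Ext X v"
      if a: "a \<in> Eminus X v" and b: "b \<in> Eplus X v" for a b
    proof
      assume "(c a, d b) \<in> Ext Y u"
      then obtain a' b' where ab': "(a', b') \<in> Ext X v" "c a = c a'" "d b = d b'" unfolding Ext by auto
      then have "a' \<in> Eminus X v" "b' \<in> Eplus X v"
        unfolding Eminus_eq_fst_Ext Eplus_eq_snd_Ext by force+
      then show "(a, b) \<in> Ext X v" using ab' a b c d by (simp add: inj_on_eq_iff)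
    qed (unfold Ext, force)
    show ?thesis using that left right key by (cases p; cases q) (simp_all add: ext_graph_adj_simps)
  qed
  moreover have "is_tree V (ext_graph_adj X v)" using dendric unfolding dendric_def V_def by blast
  ultimately have "is_tree (map_sum c d ` V) (ext_graph_adj Y u)" by (rule is_tree_inj_image)
  then show ?thesis using u V' unfolding dendric_def by simp
qed

lemma square_Ext_bispecial_not_dendric:
  assumes "(C1, D1) \<in> Ext Y u" "(C2, D1) \<in> Ext Y u" "(C2, D2) \<in> Ext Y u" "(C1, D2) \<in> Ext Y u"
    and "C1 \<noteq> C2" "D1 \<noteq> D2" and "finite (Ext Y u)" and "u \<in> lang Y"
  shows "bispecial Y u \<and> \<not> dendric Y u"
proof
  have "{C1, C2} \<subseteq> Eminus Y u" "{D1, D2} \<subseteq> Eplus Y u"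
    using assms(1-4) by (force simp: Eminus_eq_fst_Ext Eplus_eq_snd_Ext)+
  moreover have "finite (Eminus Y u)" "finite (Eplus Y u)"
    using assms(7) by (simp_all add: Eminus_eq_fst_Ext Eplus_eq_snd_Ext)
  ultimately show "bispecial Y u" using assms(5,6,8) unfolding bispecial_def
    by (metis card_2_iff card_mono)
next
  let ?cs = "[Inl C1, Inr D1, Inl C2, Inr D2]"
  have "set ?cs \<subseteq> ext_graph_vertices Y u"
    using assms(1-4) unfolding ext_graph_vertices_def by (force simp: Eminus_eq_fst_Ext Eplus_eq_snd_Ext)
  moreover have "ext_graph_adj Y u (?cs ! i) (?cs ! ((i + 1) mod length ?cs))" if "i < length ?cs" for i
  proof -
    have "i = 0 \<or> i = 1 \<or> i = 2 \<or> i = 3" using that by auto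
    then show ?thesis using assms(1-4) by (auto simp: ext_graph_adj_simps)
  qed
  ultimately have "\<not> graph_acyclic (ext_graph_vertices Y u) (ext_graph_adj Y u)"
    unfolding graph_acyclic_def not_not using assms(5,6) by (intro exI[of _ ?cs]) simp
  then show "\<not> dendric Y u" by (simp add: dendric_def is_tree_def)
qed

lemma graph_connected_path5:
  assumes E: "\<And>u v. E u v \<longleftrightarrow>
      (u, v) \<in> {(w1, w2), (w2, w3), (w3, w4), (w4, w5)} \<or> (v, u) \<in> {(w1, w2), (w2, w3), (w3, w4), (w4, w5)}"
  shows "graph_connected {w1, w2, w3, w4, w5} E"
proof -
  let ?V = "{w1, w2, w3, w4, w5}"
  let ?R = "{(u, v). u \<in> ?V \<and> v \<in> ?V \<and> E u v}"
  have e: "(w1,w2) \<in> ?R" "(w2,w1) \<in> ?R" "(w2,w3) \<in> ?R" "(w3,w2) \<in> ?R"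
    "(w3,w4) \<in> ?R" "(w4,w3) \<in> ?R" "(w4,w5) \<in> ?R" "(w5,w4) \<in> ?R" using E by auto
  have f2: "(w1, w2) \<in> ?R\<^sup>*" and b2: "(w2, w1) \<in> ?R\<^sup>*" using e(1,2) by auto
  have f3: "(w1, w3) \<in> ?R\<^sup>*" and b3: "(w3, w1) \<in> ?R\<^sup>*"
    by (rule rtrancl_into_rtrancl[OF f2 e(3)], rule converse_rtrancl_into_rtrancl[OF e(4) b2])
  have f4: "(w1, w4) \<in> ?R\<^sup>*" and b4: "(w4, w1) \<in> ?R\<^sup>*"
    by (rule rtrancl_into_rtrancl[OF f3 e(5)], rule converse_rtrancl_into_rtrancl[OF e(6) b3])
  have f5: "(w1, w5) \<in> ?R\<^sup>*" and b5: "(w5, w1) \<in> ?R\<^sup>*"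
    by (rule rtrancl_into_rtrancl[OF f4 e(7)], rule converse_rtrancl_into_rtrancl[OF e(8) b4])
  have "(w1, x) \<in> ?R\<^sup>* \<and> (x, w1) \<in> ?R\<^sup>*" if "x \<in> ?V" for x
    using that f2 f3 f4 f5 b2 b3 b4 b5 by auto
  then show ?thesis unfolding graph_connected_def by (blast intro: rtrancl_trans)
qed

lemma graph_acyclic_path5:
  assumes d: "distinct [w1, w2, w3, w4, w5]"
    and E: "\<And>u v. E u v \<longleftrightarrow>
      (u, v) \<in> {(w1, w2), (w2, w3), (w3, w4), (w4, w5)} \<or> (v, u) \<in> {(w1, w2), (w2, w3), (w3, w4), (w4, w5)}"
  shows "graph_acyclic {w1, w2, w3, w4, w5} E"
  unfolding graph_acyclic_def
proof
  assume "\<exists>cs. 3 \<le> length cs \<and> distinct cs \<and> set cs \<subseteq> {w1, w2, w3, w4, w5} \<and>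
    (\<forall>i<length cs. E (cs ! i) (cs ! ((i + 1) mod length cs)))"
  then obtain cs where cs: "3 \<le> length cs" "distinct cs" "set cs \<subseteq> {w1, w2, w3, w4, w5}"
    "\<forall>i<length cs. E (cs ! i) (cs ! ((i + 1) mod length cs))" by blast
  have sym: "E u v \<Longrightarrow> E v u" for u v using E[of u v] E[of v u] by blast
  have leaf: "v \<notin> set cs" if "\<And>u'. u' \<in> set cs \<Longrightarrow> E v u' \<Longrightarrow> u' = u" for v u
  proof
    assume "v \<in> set cs"
    then obtain u1 u2 where "u1 \<in> set cs" "u2 \<in> set cs" "u1 \<noteq> u2" "E v u1" "E v u2"
      using cycle_two_neighbours[of E cs v] cs(1,2,4) sym by blast
    then show False using that by blast
  qed
  have "w1 \<notin> set cs" by (rule leaf[of _ w2]) (use E d in simp)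
  moreover have "w5 \<notin> set cs" by (rule leaf[of _ w4]) (use E d in auto)
  moreover have "w2 \<notin> set cs" by (rule leaf[of _ w3]) (use E d \<open>w1 \<notin> set cs\<close> in auto)
  moreover have "w4 \<notin> set cs" by (rule leaf[of _ w3]) (use E d \<open>w5 \<notin> set cs\<close> in auto)
  ultimately have "set cs \<subseteq> {w3}" using cs(3) by auto
  then have "length cs \<le> 1" using distinct_card[OF cs(2)] card_mono[of "{w3}" "set cs"] by simp
  then show False using cs(1) by simp
qed

lemma is_tree_path5:
  assumes d: "distinct [w1, w2, w3, w4, w5]"
    and E: "\<And>u v. E u v \<longleftrightarrow>
      (u, v) \<in> {(w1, w2), (w2, w3), (w3, w4), (w4, w5)} \<or> (v, u) \<in> {(w1, w2), (w2, w3), (w3, w4), (w4, w5)}"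
  shows "is_tree {w1, w2, w3, w4, w5} E"
  unfolding is_tree_def using graph_connected_path5[OF E] graph_acyclic_path5[OF d E] by blast

lemma is_tree_zigzag_left:
  assumes "distinct [x1, x2, x3]" "distinct [y1, y2]"
  shows "is_tree (Inl ` {x1, x2, x3} \<union> Inr ` {y1, y2})
    (\<lambda>u v. \<exists>a b. (a, b) \<in> {(x1, y1), (x2, y1), (x2, y2), (x3, y2)} \<and> (u = Inl a \<and> v = Inr b \<or> u = Inr b \<and> v = Inl a))"
proof -
  have "Inl ` {x1, x2, x3} \<union> Inr ` {y1, y2} = {Inl x1, Inr y1, Inl x2, Inr y2, Inl x3}" by auto
  then show ?thesis
    by (simp only:) (rule is_tree_path5, use assms in simp, blast)
qed

lemma is_tree_zigzag_right:
  assumes "distinct [x1, x2]" "distinct [y1, y2, y3]"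
  shows "is_tree (Inl ` {x1, x2} \<union> Inr ` {y1, y2, y3})
    (\<lambda>u v. \<exists>a b. (a, b) \<in> {(x1, y1), (x1, y2), (x2, y2), (x2, y3)} \<and> (u = Inl a \<and> v = Inr b \<or> u = Inr b \<and> v = Inl a))"
proof -
  have "Inl ` {x1, x2} \<union> Inr ` {y1, y2, y3} = {Inr y1, Inl x1, Inr y2, Inl x2, Inr y3}" by auto
  then show ?thesis
    by (simp only:) (rule is_tree_path5, use assms in simp, blast)
qed

section \<open>Periodic shift spaces\<close>

definition periodic_seq :: "'a list \<Rightarrow> int \<Rightarrow> int \<Rightarrow> 'a" where
  "periodic_seq w k = (\<lambda>n. w ! nat ((n + k) mod int (length w)))"

lemma periodic_seq_in: "w \<noteq> [] \<Longrightarrow> periodic_seq w k n \<in> set w"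
proof -
  assume "w \<noteq> []"
  then have "nat ((n + k) mod int (length w)) < length w"
    by (simp add: nat_less_iff)
  then show ?thesis unfolding periodic_seq_def by simp
qed

lemma periodic_seq_mod: "w \<noteq> [] \<Longrightarrow> periodic_seq w k = periodic_seq w (k mod int (length w))"
  unfolding periodic_seq_def by (simp add: mod_add_right_eq)

lemma shift_periodic_seq: "shift (periodic_seq w k) = periodic_seq w (k + 1)"
  unfolding shift_def periodic_seq_def by (simp add: algebra_simps)

lemma closedin_finite_sequences:
  assumes "finite X" "X \<subseteq> UNIV \<rightarrow> A"
  shows "closedin (product_topology (\<lambda>_::int. discrete_topology A) UNIV) X"
proof -
  have "t1_space (product_topology (\<lambda>_::int. discrete_topology A) UNIV)"
    by (rule Hausdorff_imp_t1_space) (simp add: Hausdorff_space_product_topology)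
  moreover have "X \<subseteq> topspace (product_topology (\<lambda>_::int. discrete_topology A) UNIV)"
    using assms(2) by (auto simp: PiE_def)
  ultimately show ?thesis using assms(1) t1_space_closedin_finite by blast
qed

lemma periodic_seq_yyzz_window:
  assumes "a # [y, y, z, z] @ [b] = map (\<lambda>j. periodic_seq [c0, y, y, z, z, c5] k (i + int j)) [0..<6]"
    and "y \<noteq> z"
  shows "a = c0 \<and> b = c5"
proof -
  define r where "r = (i + k) mod 6"
  have r: "0 \<le> r" "r < 6" unfolding r_def by simp_all
  have e: "\<And>j. j < 6 \<Longrightarrow> (a # [y, y, z, z] @ [b]) ! j = [c0, y, y, z, z, c5] ! nat ((r + int j) mod 6)"
  proof -
    fix j :: nat assume j: "j < 6"
    have m: "(r + int j) mod 6 = (i + (k + int j)) mod 6" unfolding r_def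
      by (metis mod_add_right_eq add.commute add.left_commute)
    show "(a # [y, y, z, z] @ [b]) ! j = [c0, y, y, z, z, c5] ! nat ((r + int j) mod 6)"
      using arg_cong[OF assms(1), of "\<lambda>l. l ! j"] j unfolding m periodic_seq_def by (simp add: algebra_simps)
  qed
  have e0: "a = [c0, y, y, z, z, c5] ! nat (r mod 6)" using e[of 0] by simp
  have e1: "y = [c0, y, y, z, z, c5] ! nat ((r + 1) mod 6)" using e[of 1] by simp
  have e2: "y = [c0, y, y, z, z, c5] ! nat ((r + 2) mod 6)" using e[of 2] by simp
  have e3: "z = [c0, y, y, z, z, c5] ! nat ((r + 3) mod 6)" using e[of 3] by simp
  have e4: "z = [c0, y, y, z, z, c5] ! nat ((r + 4) mod 6)" using e[of 4] by simp
  have e5: "b = [c0, y, y, z, z, c5] ! nat ((r + 5) mod 6)" using e[of 5] by simp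
  consider "r = 0" | "r = 1" | "r = 2" | "r = 3" | "r = 4" | "r = 5" using r by linarith
  then show ?thesis
  proof cases
    case 1 then show ?thesis using e0 e5 by simp
  next
    case 2 then show ?thesis using e2 e3 assms(2) by simp
  next
    case 3 then show ?thesis using e1 e2 assms(2) by simp
  next
    case 4 then show ?thesis using e1 e2 assms(2) by simp
  next
    case 5 then show ?thesis using e2 e3 assms(2) by (simp add: numeral_eq_Suc)
  next
    case 6 then show ?thesis using e2 e3 assms(2) by (simp add: numeral_eq_Suc)
  qed
qed

lemma finite_periodic_seqs:
  assumes "finite W" "\<And>w. w \<in> W \<Longrightarrow> w \<noteq> []"
  shows "finite {periodic_seq w k | w k. w \<in> W}"
proof (rule finite_subset)
  show "{periodic_seq w k | w k. w \<in> W} \<subseteq> (\<Union>w\<in>W. periodic_seq w ` {0..<int (length w)})"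
  proof
    fix x assume "x \<in> {periodic_seq w k | w k. w \<in> W}"
    then obtain w k where w: "w \<in> W" "x = periodic_seq w k" by blast
    then have "x = periodic_seq w (k mod int (length w))" using periodic_seq_mod assms(2) by blast
    moreover have "k mod int (length w) \<in> {0..<int (length w)}" using assms(2)[OF w(1)] by simp
    ultimately show "x \<in> (\<Union>w\<in>W. periodic_seq w ` {0..<int (length w)})" using w(1) by blast
  qed
qed (use assms(1) in simp)

lemma shift_periodic_seqs: "shift ` {periodic_seq w k | w k. w \<in> W} = {periodic_seq w k | w k. w \<in> W}"
proof
  show "shift ` {periodic_seq w k | w k. w \<in> W} \<subseteq> {periodic_seq w k | w k. w \<in> W}"
  proof
    fix x assume "x \<in> shift ` {periodic_seq w k | w k. w \<in> W}"
    then obtain w k where "w \<in> W" "x = shift (periodic_seq w k)" by blast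
    then show "x \<in> {periodic_seq w k | w k. w \<in> W}" unfolding shift_periodic_seq by blast
  qed
  show "{periodic_seq w k | w k. w \<in> W} \<subseteq> shift ` {periodic_seq w k | w k. w \<in> W}"
  proof
    fix x assume "x \<in> {periodic_seq w k | w k. w \<in> W}"
    then obtain w k where w: "w \<in> W" "x = periodic_seq w k" by blast
    then have "x = shift (periodic_seq w (k - 1))" using shift_periodic_seq[of w "k - 1"] by simp
    then show "x \<in> shift ` {periodic_seq w k | w k. w \<in> W}" using w(1) by blast
  qed
qed

lemma periodic_shift_space:
  assumes fin: "finite W" and ne: "\<And>w. w \<in> W \<Longrightarrow> w \<noteq> []" and WA: "\<And>w. w \<in> W \<Longrightarrow> set w \<subseteq> A"
    and F: "F \<in> W" "set F = A"
  shows "shift_space A {periodic_seq w k | w k. w \<in> W}"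
proof -
  define X where "X = {periodic_seq w k | w k. w \<in> W}"
  have XA: "X \<subseteq> UNIV \<rightarrow> A"
  proof
    fix x assume "x \<in> X"
    then obtain w k where "w \<in> W" "x = periodic_seq w k" unfolding X_def by blast
    then show "x \<in> UNIV \<rightarrow> A" using periodic_seq_in[of w k] WA[of w] ne[of w] by auto
  qed
  have occ: "\<forall>a\<in>A. \<exists>x\<in>X. \<exists>i. x i = a"
  proof
    fix a assume "a \<in> A"
    then obtain j where "j < length F" "F ! j = a" using F(2) in_set_conv_nth[of a F] by blast
    then have "periodic_seq F 0 (int j) = a" unfolding periodic_seq_def by simp
    moreover have "periodic_seq F 0 \<in> X" using F(1) unfolding X_def by blast
    ultimately show "\<exists>x\<in>X. \<exists>i. x i = a" by blast
  qed
  have "finite X" unfolding X_def using fin ne by (rule finite_periodic_seqs)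
  then have "shift_space A X"
    using XA closedin_finite_sequences[OF _ XA] shift_periodic_seqs[of W] occ
    unfolding shift_space_def X_def by blast
  then show ?thesis by (simp add: X_def)
qed

lemma periodic_seq_distinct_Suc:
  assumes "distinct F" "2 \<le> length F"
  shows "periodic_seq F k (n + 1) \<noteq> periodic_seq F k n"
proof
  let ?L = "int (length F)"
  have L: "?L > 0" using assms(2) by (cases F) auto
  assume "periodic_seq F k (n + 1) = periodic_seq F k n"
  then have "F ! nat ((n + 1 + k) mod ?L) = F ! nat ((n + k) mod ?L)" unfolding periodic_seq_def .
  moreover have "nat ((n + 1 + k) mod ?L) < length F" "nat ((n + k) mod ?L) < length F"
    using L by (simp_all add: nat_less_iff)
  ultimately have "nat ((n + 1 + k) mod ?L) = nat ((n + k) mod ?L)"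
    using assms(1) nth_eq_iff_index_eq by blast
  moreover have "0 \<le> (n + 1 + k) mod ?L" "0 \<le> (n + k) mod ?L" using L by simp_all
  ultimately have "(n + 1 + k) mod ?L = (n + k) mod ?L" using eq_nat_nat_iff by blast
  then have "?L dvd (n + 1 + k) - (n + k)" by (simp only: mod_eq_dvd_iff)
  then have "?L \<le> 1" using zdvd_imp_le[of ?L 1] by simp
  then show False using assms(2) by simp
qed

lemma Ext_periodic_yyzz:
  assumes F: "distinct F" "2 \<le> length F" and "y \<noteq> z"
  shows "a # [y, y, z, z] @ [b] \<in> lang {periodic_seq w k | w k. w \<in> insert F ((\<lambda>(a, b). [a, y, y, z, z, b]) ` P)}
    \<longleftrightarrow> (a, b) \<in> P"
    (is "_ \<in> lang ?X \<longleftrightarrow> _")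
proof
  have len: "length (a # [y, y, z, z] @ [b]) = 6" by simp
  assume "a # [y, y, z, z] @ [b] \<in> lang ?X"
  then obtain x i where x: "x \<in> ?X" and xi: "a # [y, y, z, z] @ [b] = map (\<lambda>j. x (i + int j)) [0..<6]"
    unfolding lang_def mem_Collect_eq len by (elim bexE exE) (rule that)
  then obtain w k where w: "w \<in> insert F ((\<lambda>(a, b). [a, y, y, z, z, b]) ` P)" "x = periodic_seq w k"
    by blast
  show "(a, b) \<in> P"
  proof (cases "w = F")
    case True
    have "(a # [y, y, z, z] @ [b]) ! j = x (i + int j)" if "j < 6" for j
      using arg_cong[OF xi, of "\<lambda>u. u ! j"] that by simp
    from this[of 1] this[of 2] have "x (i + 1 + 1) = x (i + 1)" by (simp add: add.assoc)
    then show ?thesis using periodic_seq_distinct_Suc[OF F] w(2) True by blast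
  next
    case False
    then obtain a' b' where "(a', b') \<in> P" "w = [a', y, y, z, z, b']" using w(1) by auto
    then show ?thesis using periodic_seq_yyzz_window[of a y z b a' b' k i] xi w(2) assms(3) by simp
  qed
next
  assume "(a, b) \<in> P"
  then have "periodic_seq [a, y, y, z, z, b] 0 \<in> ?X" by force
  moreover have "a # [y, y, z, z] @ [b] = map (\<lambda>j. periodic_seq [a, y, y, z, z, b] 0 (0 + int j))
      [0..<length (a # [y, y, z, z] @ [b])]"
    unfolding periodic_seq_def by (simp add: upt_rec)
  ultimately show "a # [y, y, z, z] @ [b] \<in> lang ?X" unfolding lang_def
    by (intro CollectI bexI[of _ "periodic_seq [a, y, y, z, z, b] 0"] exI[of _ 0]) simp_all
qed

text \<open>The extensions \<open>(a, b) \<in> P\<close> of \<open>v = yyzz\<close> are realised by periodic points of period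
  \<open>ayyzzb\<close>, whose phase is pinned down by the factor \<open>yy\<close>; one more periodic point running
  through all letters makes every letter occur without creating the factor \<open>yy\<close>.\<close>
lemma shift_space_with_Ext:
  assumes fin: "finite A" and two: "card A \<ge> 2" and PA: "P \<subseteq> A \<times> A" and Pne: "P \<noteq> {}"
  obtains X v where "shift_space A X" "v \<in> lists A" "v \<in> lang X" "Ext X v = P"
proof -
  obtain y z where yz: "y \<in> A" "z \<in> A" "y \<noteq> z" using two by (rule card_ge_2_obtain)
  obtain F where F: "set F = A" "distinct F" using finite_distinct_list[OF fin] by blast
  have lF: "2 \<le> length F" using distinct_card[OF F(2)] F(1) two by simp
  define W where "W = insert F ((\<lambda>(a, b). [a, y, y, z, z, b]) ` P)"
  define X where "X = {periodic_seq w k | w k. w \<in> W}"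
  have "finite P" using PA fin by (meson finite_SigmaI finite_subset)
  have X: "shift_space A X" unfolding X_def
  proof (rule periodic_shift_space[where F = F])
    show "finite W" using \<open>finite P\<close> by (simp add: W_def)
    show "w \<noteq> []" if "w \<in> W" for w using that lF by (auto simp: W_def)
    show "set w \<subseteq> A" if "w \<in> W" for w using that F(1) PA yz by (auto simp: W_def)
  qed (simp_all add: W_def F(1))
  have ext: "a # [y, y, z, z] @ [b] \<in> lang X \<longleftrightarrow> (a, b) \<in> P" for a b
    unfolding X_def W_def using Ext_periodic_yyzz[OF F(2) lF yz(3)] .
  obtain a b where "(a, b) \<in> P" using Pne by auto
  then have "[y, y, z, z] \<in> lang X" using ext lang_sublist[OF sublist_appendI[of _ "[a]" "[b]"]] by simp
  moreover have "Ext X [y, y, z, z] = P" using ext unfolding Ext_def by auto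
  moreover have "[y, y, z, z] \<in> lists A" using yz by simp
  ultimately show ?thesis using that X by blast
qed

section \<open>Dendric preservation\<close>

lemma injective_morphism_inj_on:
  assumes "injective_morphism A \<sigma>" shows "inj_on \<sigma> A"
proof (rule inj_onI)
  fix a a' assume a: "a \<in> A" "a' \<in> A" "\<sigma> a = \<sigma> a'"
  then have "morph \<sigma> [a] = morph \<sigma> [a']" by simp
  moreover have "[a] \<in> lists A" "[a'] \<in> lists A" using a by auto
  ultimately have "[a] = [a']" using assms unfolding injective_morphism_def by (meson inj_onD)
  then show "a = a'" by simp
qed

context strongly_left_proper_morphism
begin

lemma prefix_free_rev_image: "prefix_free A (\<lambda>a. rev (\<sigma> a))"
proof
  fix a1 a2 assume a: "a1 \<in> A" "a2 \<in> A" "a1 \<noteq> a2"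
  show "\<not> prefix (rev (\<sigma> a1)) (rev (\<sigma> a2))"
  proof
    assume "prefix (rev (\<sigma> a1)) (rev (\<sigma> a2))"
    then obtain r where r: "\<sigma> a2 = r @ \<sigma> a1" by (auto simp: suffix_to_prefix[symmetric] suffix_def)
    show False
    proof (cases "r = []")
      case True
      then show False using r inj_image a by (simp add: inj_on_eq_iff)
    next
      case False
      obtain r1 where "\<sigma> a1 = l # r1" using a(1) by (rule image_marker)
      then have "\<sigma> a2 ! length r = l" "length r < length (\<sigma> a2)" using r by (simp_all add: nth_append)
      then show False using nth_image_eq_marker[OF a(2)] False by blast
    qed
  qed
qed

text \<open>The images themselves need not be prefix-free (\<open>[l]\<close> is a prefix of \<open>[l, c]\<close>); appending
  the marker makes them so without changing their pairwise longest common prefixes.\<close>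
lemma prefix_free_image_marker: "prefix_free A (\<lambda>a. \<sigma> a @ [l])"
proof
  fix a1 a2 assume a: "a1 \<in> A" "a2 \<in> A" "a1 \<noteq> a2"
  show "\<not> prefix (\<sigma> a1 @ [l]) (\<sigma> a2 @ [l])"
  proof
    assume pre: "prefix (\<sigma> a1 @ [l]) (\<sigma> a2 @ [l])"
    then obtain zs where zs: "\<sigma> a2 @ [l] = (\<sigma> a1 @ [l]) @ zs" by (auto simp: prefix_def)
    show False
    proof (cases "length (\<sigma> a1) < length (\<sigma> a2)")
      case True
      then have "\<sigma> a2 ! length (\<sigma> a1) = l"
        using prefix_nth[OF pre, of "length (\<sigma> a1)"] by (simp add: nth_append)
      then show False using nth_image_eq_marker[OF a(2) True] image_not_Nil[OF a(1)] by simp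
    next
      case False
      then have "zs = []" using arg_cong[OF zs, of length] by simp
      then show False using zs inj_image a by (simp add: inj_on_eq_iff)
    qed
  qed
qed

lemma lcp_image_snoc_marker:
  assumes "b1 \<in> A" "b2 \<in> A" "b1 \<noteq> b2"
  shows "longest_common_prefix (\<sigma> b1 @ [l]) (\<sigma> b2 @ [l]) = longest_common_prefix (\<sigma> b1) (\<sigma> b2)"
proof (rule prefix_order.antisym)
  interpret prefix_free A "\<lambda>a. \<sigma> a @ [l]" by (rule prefix_free_image_marker)
  show "prefix (longest_common_prefix (\<sigma> b1 @ [l]) (\<sigma> b2 @ [l])) (longest_common_prefix (\<sigma> b1) (\<sigma> b2))"
    using lcp_strict_prefix1[OF assms] lcp_strict_prefix2[OF assms]
    unfolding strict_prefix_snoc_iff by (rule longest_common_prefix_max_prefix)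
  have "prefix (longest_common_prefix (\<sigma> b1) (\<sigma> b2)) (\<sigma> b1 @ [l])"
    "prefix (longest_common_prefix (\<sigma> b1) (\<sigma> b2)) (\<sigma> b2 @ [l])"
    using prefix_order.trans[OF longest_common_prefix_prefix1 prefixI]
      prefix_order.trans[OF longest_common_prefix_prefix2 prefixI] by blast+
  then show "prefix (longest_common_prefix (\<sigma> b1) (\<sigma> b2)) (longest_common_prefix (\<sigma> b1 @ [l]) (\<sigma> b2 @ [l]))"
    by (rule longest_common_prefix_max_prefix)
qed

lemma card_Tminus: "card (Tminus A \<sigma>) = card (lcp_set A (\<lambda>a. rev (\<sigma> a)))"
proof -
  have "Tminus A \<sigma> = rev ` lcp_set A (\<lambda>a. rev (\<sigma> a))"
    unfolding Tminus_def lcp_set_def longest_common_suffix_def by blast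
  then show ?thesis by (simp add: card_image)
qed

lemma Tplus_eq_lcp_set: "Tplus A \<sigma> = lcp_set A (\<lambda>a. \<sigma> a @ [l])"
  unfolding Tplus_def lcp_set_def
proof safe
  fix b1 b2 assume "b1 \<in> A" "b2 \<in> A" "b1 \<noteq> b2"
  then show "\<exists>a1 a2. longest_common_prefix (\<sigma> b1) (\<sigma> b2) =
      longest_common_prefix (\<sigma> a1 @ [l]) (\<sigma> a2 @ [l]) \<and> a1 \<in> A \<and> a2 \<in> A \<and> a1 \<noteq> a2"
    by (intro exI[of _ b1] exI[of _ b2]) (simp add: lcp_image_snoc_marker)
qed (auto simp: lcp_image_snoc_marker)

lemma Tminus_single_uniform:
  assumes T: "card (Tminus A \<sigma>) = 1"
    and a: "a1 \<in> A" "a2 \<in> A" "strict_suffix s (\<sigma> a1)" "strict_suffix s (\<sigma> a2)"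
    and differ: "left_letter s a1 \<noteq> left_letter s a2"
  shows "(\<forall>a\<in>A. strict_suffix s (\<sigma> a)) \<and> inj_on (left_letter s) A"
proof -
  interpret prefix_free A "\<lambda>a. rev (\<sigma> a)" by (rule prefix_free_rev_image)
  have letter: "left_letter s = (\<lambda>a. rev (\<sigma> a) ! length (rev s))"
    by (simp add: fun_eq_iff left_letter_def)
  have "(\<forall>a\<in>A. strict_prefix (rev s) (rev (\<sigma> a))) \<and> inj_on (\<lambda>a. rev (\<sigma> a) ! length (rev s)) A"
    by (rule lcp_set_single_branching)
      (use T a differ in \<open>simp_all add: card_Tminus letter strict_suffix_to_prefix\<close>)
  then show ?thesis by (simp add: letter strict_suffix_to_prefix)
qed

lemma Tplus_single_uniform:
  assumes T: "card (Tplus A \<sigma>) = 1"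
    and b: "b1 \<in> A" "b2 \<in> A" "prefix p (\<sigma> b1)" "prefix p (\<sigma> b2)"
    and differ: "right_letter p b1 \<noteq> right_letter p b2"
  shows "(\<forall>b\<in>A. prefix p (\<sigma> b)) \<and> inj_on (right_letter p) A"
proof -
  interpret prefix_free A "\<lambda>a. \<sigma> a @ [l]" by (rule prefix_free_image_marker)
  have letter: "right_letter p = (\<lambda>b. (\<sigma> b @ [l]) ! length p)"
    by (simp add: fun_eq_iff right_letter_def)
  have "(\<forall>b\<in>A. strict_prefix p (\<sigma> b @ [l])) \<and> inj_on (\<lambda>b. (\<sigma> b @ [l]) ! length p) A"
    by (rule lcp_set_single_branching)
      (use T b differ in \<open>simp_all add: Tplus_eq_lcp_set letter strict_prefix_snoc_iff\<close>)
  then show ?thesis by (simp add: letter strict_prefix_snoc_iff)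
qed

lemma bispecial_extended_image_uniform:
  assumes T: "card (Tminus A \<sigma>) = 1" "card (Tplus A \<sigma>) = 1" and X: "X \<subseteq> UNIV \<rightarrow> A"
    and ext: "(a0, b0) \<in> Ext X v" and s: "strict_suffix s (\<sigma> a0)" and p: "prefix p (\<sigma> b0)" "p \<noteq> []"
    and bis: "bispecial (shift_image \<sigma> X) (s @ morph \<sigma> v @ p)"
  shows "(\<forall>a\<in>A. strict_suffix s (\<sigma> a)) \<and> inj_on (left_letter s) A \<and>
    (\<forall>b\<in>A. prefix p (\<sigma> b)) \<and> inj_on (right_letter p) A"
proof -
  let ?u = "s @ morph \<sigma> v @ p" and ?Y = "shift_image \<sigma> X"
  have a0: "a0 \<in> A" and b0: "b0 \<in> A" and v: "v \<in> lists A" using Ext_in_alphabet[OF X ext] by auto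
  note EY = Ext_shift_image[OF X a0 s b0 p v]
  have left: "\<exists>a\<in>A. strict_suffix s (\<sigma> a) \<and> C = left_letter s a" if "C \<in> Eminus ?Y ?u" for C
    using that Ext_in_alphabet[OF X] unfolding Eminus_eq_fst_Ext EY by force
  have right: "\<exists>b\<in>A. prefix p (\<sigma> b) \<and> D = right_letter p b" if "D \<in> Eplus ?Y ?u" for D
    using that Ext_in_alphabet[OF X] unfolding Eplus_eq_snd_Ext EY by force
  obtain C1 C2 where "C1 \<in> Eminus ?Y ?u" "C2 \<in> Eminus ?Y ?u" "C1 \<noteq> C2"
    using bis unfolding bispecial_def by (auto elim: card_ge_2_obtain)
  then obtain a1 a2 where "a1 \<in> A" "a2 \<in> A" "strict_suffix s (\<sigma> a1)" "strict_suffix s (\<sigma> a2)"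
    "left_letter s a1 \<noteq> left_letter s a2" using left by metis
  then have "(\<forall>a\<in>A. strict_suffix s (\<sigma> a)) \<and> inj_on (left_letter s) A"
    by (rule Tminus_single_uniform[OF T(1)])
  moreover obtain D1 D2 where "D1 \<in> Eplus ?Y ?u" "D2 \<in> Eplus ?Y ?u" "D1 \<noteq> D2"
    using bis unfolding bispecial_def by (auto elim: card_ge_2_obtain)
  then obtain b1 b2 where "b1 \<in> A" "b2 \<in> A" "prefix p (\<sigma> b1)" "prefix p (\<sigma> b2)"
    "right_letter p b1 \<noteq> right_letter p b2" using right by metis
  then have "(\<forall>b\<in>A. prefix p (\<sigma> b)) \<and> inj_on (right_letter p) A"
    by (rule Tplus_single_uniform[OF T(2)])
  ultimately show ?thesis by blast
qed

lemma dendric_preserving_if_Tminus_Tplus_single: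
  assumes T: "card (Tminus A \<sigma>) = 1" "card (Tplus A \<sigma>) = 1"
    and X: "shift_space A X" and v: "dendric X v"
  shows "dendric_preserving \<sigma> l X v"
  unfolding dendric_preserving_def
proof (intro allI impI)
  fix u assume "extended_image \<sigma> l X u v \<and> bispecial (shift_image \<sigma> X) u"
  then obtain s p a0 b0 where u: "u \<in> lang (shift_image \<sigma> X)" "u = s @ morph \<sigma> v @ p"
    and ext: "(a0, b0) \<in> Ext X v" and s: "strict_suffix s (\<sigma> a0)" and p: "prefix p (\<sigma> b0)" "p \<noteq> []"
    and bis: "bispecial (shift_image \<sigma> X) u"
    unfolding extended_image_def by blast
  have XA: "X \<subseteq> UNIV \<rightarrow> A" using X unfolding shift_space_def by blast
  have a0: "a0 \<in> A" and vA: "v \<in> lists A" using Ext_in_alphabet[OF XA ext] by auto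
  have uniform: "(\<forall>a\<in>A. strict_suffix s (\<sigma> a)) \<and> inj_on (left_letter s) A \<and>
      (\<forall>b\<in>A. prefix p (\<sigma> b)) \<and> inj_on (right_letter p) A"
    using bispecial_extended_image_uniform[OF T XA ext s p] bis u(2) by blast
  have "{(a, b) \<in> Ext X v. strict_suffix s (\<sigma> a) \<and> prefix p (\<sigma> b)} = Ext X v"
    using uniform Ext_in_alphabet[OF XA] by blast
  then have EY: "Ext (shift_image \<sigma> X) u = map_prod (left_letter s) (right_letter p) ` Ext X v"
    using Ext_shift_image[OF XA a0 s _ p(1,2) vA] Ext_in_alphabet[OF XA ext] u(2) by simp
  have "Eminus X v \<subseteq> A" "Eplus X v \<subseteq> A"
    using Ext_in_alphabet[OF XA] by (auto simp: Eminus_eq_fst_Ext Eplus_eq_snd_Ext)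
  then show "dendric (shift_image \<sigma> X) u"
    using dendric_if_Ext_inj_image[OF EY _ _ v u(1)] uniform inj_on_subset by blast
qed

lemma not_dendric_preserving_witness:
  assumes fin: "finite A" and two: "card A \<ge> 2" and PA: "P \<subseteq> A \<times> A"
    and tree: "is_tree (Inl ` fst ` P \<union> Inr ` snd ` P)
      (\<lambda>u v. \<exists>a b. (a, b) \<in> P \<and> (u = Inl a \<and> v = Inr b \<or> u = Inr b \<and> v = Inl a))"
    and L: "card (fst ` P) \<ge> 2" and R: "card (snd ` P) \<ge> 2"
    and sP: "\<And>a b. (a, b) \<in> P \<Longrightarrow> strict_suffix s (\<sigma> a)"
    and pP: "\<And>a b. (a, b) \<in> P \<Longrightarrow> prefix p (\<sigma> b)" and p: "p \<noteq> []"
    and square: "C \<noteq> C'" "D \<noteq> D'"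
      "{(C, D), (C', D), (C', D'), (C, D')} \<subseteq> map_prod (left_letter s) (right_letter p) ` P"
  shows "\<exists>X v. shift_space A X \<and> v \<in> lang X \<and> bispecial X v \<and> dendric X v \<and> \<not> dendric_preserving \<sigma> l X v"
proof -
  have "P \<noteq> {}" using L by auto
  then obtain a0 b0 where ab0: "(a0, b0) \<in> P" by auto
  obtain X v where X: "shift_space A X" "v \<in> lists A" "v \<in> lang X" "Ext X v = P"
    using shift_space_with_Ext[OF fin two PA \<open>P \<noteq> {}\<close>] by blast
  have XA: "X \<subseteq> UNIV \<rightarrow> A" using X(1) unfolding shift_space_def by blast
  have "bispecial X v" "dendric X v"
    using X(3,4) L R tree unfolding bispecial_def dendric_def ext_graph_vertices_def ext_graph_adj_def
      Eminus_eq_fst_Ext Eplus_eq_snd_Ext by simp_all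
  define u where "u = s @ morph \<sigma> v @ p"
  have "{(a, b) \<in> P. strict_suffix s (\<sigma> a) \<and> prefix p (\<sigma> b)} = P" using sP pP by blast
  then have EY: "Ext (shift_image \<sigma> X) u = map_prod (left_letter s) (right_letter p) ` P"
    using Ext_shift_image[OF XA _ sP[OF ab0] _ pP[OF ab0] p X(2)] PA ab0 X(4) unfolding u_def by auto
  have fin_Ext: "finite (Ext (shift_image \<sigma> X) u)" using EY PA fin by (simp add: finite_subset)
  have sq: "(C, D) \<in> Ext (shift_image \<sigma> X) u" "(C', D) \<in> Ext (shift_image \<sigma> X) u"
    "(C', D') \<in> Ext (shift_image \<sigma> X) u" "(C, D') \<in> Ext (shift_image \<sigma> X) u"
    using square(3) unfolding EY by auto
  have uY: "u \<in> lang (shift_image \<sigma> X)"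
    using sq(1) lang_sublist[OF sublist_appendI[of u "[C]" "[D]"]] unfolding Ext_def by simp
  have "bispecial (shift_image \<sigma> X) u \<and> \<not> dendric (shift_image \<sigma> X) u"
    by (rule square_Ext_bispecial_not_dendric[OF sq square(1,2) fin_Ext uY])
  moreover have "extended_image \<sigma> l X u v"
    using extended_image_intro[OF u_def uY _ _ sP[OF ab0] pP[OF ab0] p] ab0 X(4) PA by blast
  ultimately have "\<not> dendric_preserving \<sigma> l X v" unfolding dendric_preserving_def by blast
  then show ?thesis using X(1,3) \<open>bispecial X v\<close> \<open>dendric X v\<close> by blast
qed

lemma left_branching_pair:
  assumes "a1 \<in> A" "a2 \<in> A" "a1 \<noteq> a2"
  obtains s where "strict_suffix s (\<sigma> a1)" "strict_suffix s (\<sigma> a2)" "left_letter s a1 \<noteq> left_letter s a2"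
proof -
  interpret prefix_free A "\<lambda>a. rev (\<sigma> a)" by (rule prefix_free_rev_image)
  define s where "s = rev (longest_common_prefix (rev (\<sigma> a1)) (rev (\<sigma> a2)))"
  have "strict_suffix s (\<sigma> a1)" "strict_suffix s (\<sigma> a2)"
    using lcp_strict_prefix1[OF assms] lcp_strict_prefix2[OF assms] unfolding s_def
    by (simp_all add: strict_suffix_to_prefix)
  moreover have "left_letter s a1 \<noteq> left_letter s a2"
    using lcp_nth_neq[OF assms] unfolding s_def left_letter_def by simp
  ultimately show ?thesis by (rule that)
qed

lemma right_branching_pair:
  assumes "b1 \<in> A" "b2 \<in> A" "b1 \<noteq> b2"
  obtains p where "p \<noteq> []" "prefix p (\<sigma> b1)" "prefix p (\<sigma> b2)" "right_letter p b1 \<noteq> right_letter p b2"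
proof -
  interpret prefix_free A "\<lambda>a. \<sigma> a @ [l]" by (rule prefix_free_image_marker)
  define p where "p = longest_common_prefix (\<sigma> b1 @ [l]) (\<sigma> b2 @ [l])"
  have "prefix p (\<sigma> b1)" "prefix p (\<sigma> b2)"
    using lcp_strict_prefix1[OF assms] lcp_strict_prefix2[OF assms] unfolding p_def strict_prefix_snoc_iff .
  moreover have right: "right_letter p b1 \<noteq> right_letter p b2"
    using lcp_nth_neq[OF assms] unfolding p_def right_letter_def .
  moreover have "p \<noteq> []" using right right_letter_Nil assms(1,2) by auto
  ultimately show ?thesis using that by blast
qed

lemma Tminus_not_single_branching:
  assumes "finite A" "card A \<ge> 2" "card (Tminus A \<sigma>) \<noteq> 1"
  obtains s a1 a2 a3 where "a1 \<in> A" "a2 \<in> A" "a3 \<in> A" "a1 \<noteq> a2"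
    "strict_suffix s (\<sigma> a1)" "strict_suffix s (\<sigma> a2)" "strict_suffix s (\<sigma> a3)"
    "left_letter s a2 = left_letter s a1" "left_letter s a1 \<noteq> left_letter s a3"
proof -
  interpret prefix_free A "\<lambda>a. rev (\<sigma> a)" by (rule prefix_free_rev_image)
  obtain q a1 a2 a3 where "a1 \<in> A" "a2 \<in> A" "a3 \<in> A" "a1 \<noteq> a2"
    "strict_prefix q (rev (\<sigma> a1))" "strict_prefix q (rev (\<sigma> a2))" "strict_prefix q (rev (\<sigma> a3))"
    "rev (\<sigma> a1) ! length q = rev (\<sigma> a2) ! length q" "rev (\<sigma> a1) ! length q \<noteq> rev (\<sigma> a3) ! length q"
    by (rule lcp_set_non_single_branching[OF assms(1,2)]) (use assms(3) in \<open>simp add: card_Tminus\<close>)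
  then show ?thesis using that[of a1 a2 a3 "rev q"] by (simp add: strict_suffix_to_prefix left_letter_def)
qed

lemma Tplus_not_single_branching:
  assumes "finite A" "card A \<ge> 2" "card (Tplus A \<sigma>) \<noteq> 1"
  obtains p b1 b2 b3 where "b1 \<in> A" "b2 \<in> A" "b3 \<in> A" "b1 \<noteq> b2" "p \<noteq> []"
    "prefix p (\<sigma> b1)" "prefix p (\<sigma> b2)" "prefix p (\<sigma> b3)"
    "right_letter p b2 = right_letter p b1" "right_letter p b1 \<noteq> right_letter p b3"
proof -
  interpret prefix_free A "\<lambda>a. \<sigma> a @ [l]" by (rule prefix_free_image_marker)
  obtain p b1 b2 b3 where b: "b1 \<in> A" "b2 \<in> A" "b3 \<in> A" "b1 \<noteq> b2"
    "strict_prefix p (\<sigma> b1 @ [l])" "strict_prefix p (\<sigma> b2 @ [l])" "strict_prefix p (\<sigma> b3 @ [l])"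
    and letters: "(\<sigma> b1 @ [l]) ! length p = (\<sigma> b2 @ [l]) ! length p"
      "(\<sigma> b1 @ [l]) ! length p \<noteq> (\<sigma> b3 @ [l]) ! length p"
    by (rule lcp_set_non_single_branching[OF assms(1,2)]) (use assms(3) in \<open>simp add: Tplus_eq_lcp_set\<close>)
  then have "p \<noteq> []" using right_letter_Nil[of b1] right_letter_Nil[of b3] unfolding right_letter_def by auto
  then show ?thesis using that[of b1 b2 b3 p] b letters by (simp add: strict_prefix_snoc_iff right_letter_def)
qed

text \<open>The letters \<open>a\<^sub>1\<close> and \<open>a\<^sub>2\<close> have the same letter before \<open>s\<close>, so the path
  \<open>a\<^sub>1 - b\<^sub>1 - a\<^sub>3 - b\<^sub>2 - a\<^sub>2\<close> is folded onto a square.\<close>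
lemma not_dendric_preserving_if_Tminus_not_single:
  assumes fin: "finite A" and two: "card A \<ge> 2" and T: "card (Tminus A \<sigma>) \<noteq> 1"
  shows "\<exists>X v. shift_space A X \<and> v \<in> lang X \<and> bispecial X v \<and> dendric X v \<and> \<not> dendric_preserving \<sigma> l X v"
proof -
  obtain s a1 a2 a3 where a: "a1 \<in> A" "a2 \<in> A" "a3 \<in> A" "a1 \<noteq> a2"
    and s: "strict_suffix s (\<sigma> a1)" "strict_suffix s (\<sigma> a2)" "strict_suffix s (\<sigma> a3)"
    and left: "left_letter s a2 = left_letter s a1" "left_letter s a1 \<noteq> left_letter s a3"
    by (rule Tminus_not_single_branching[OF fin two T])
  obtain b1 b2 where b: "b1 \<in> A" "b2 \<in> A" "b1 \<noteq> b2" using two by (rule card_ge_2_obtain)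
  then obtain p where p: "p \<noteq> []" "prefix p (\<sigma> b1)" "prefix p (\<sigma> b2)"
    and right: "right_letter p b1 \<noteq> right_letter p b2" by (rule right_branching_pair)
  have a3: "a1 \<noteq> a3" "a2 \<noteq> a3" using left by auto
  define P where "P = {(a1, b1), (a3, b1), (a3, b2), (a2, b2)}"
  show ?thesis
  proof (rule not_dendric_preserving_witness[where P = P and s = s and p = p and
        C = "left_letter s a1" and C' = "left_letter s a3" and
        D = "right_letter p b1" and D' = "right_letter p b2", OF fin two])
    show "is_tree (Inl ` fst ` P \<union> Inr ` snd ` P)
      (\<lambda>u v. \<exists>a b. (a, b) \<in> P \<and> (u = Inl a \<and> v = Inr b \<or> u = Inr b \<and> v = Inl a))"
      using is_tree_zigzag_left[of a1 a3 a2 b1 b2] a(4) a3 b(3) unfolding P_def by simp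
    show "card (fst ` P) \<ge> 2" "card (snd ` P) \<ge> 2"
      using a3 b(3) unfolding P_def by (auto simp: card_insert_if)
    show "{(left_letter s a1, right_letter p b1), (left_letter s a3, right_letter p b1),
        (left_letter s a3, right_letter p b2), (left_letter s a1, right_letter p b2)}
      \<subseteq> map_prod (left_letter s) (right_letter p) ` P"
      using left(1) unfolding P_def by force
  qed (use a b s p left right in \<open>auto simp: P_def\<close>)
qed

lemma not_dendric_preserving_if_Tplus_not_single:
  assumes fin: "finite A" and two: "card A \<ge> 2" and T: "card (Tplus A \<sigma>) \<noteq> 1"
  shows "\<exists>X v. shift_space A X \<and> v \<in> lang X \<and> bispecial X v \<and> dendric X v \<and> \<not> dendric_preserving \<sigma> l X v"
proof -
  obtain p b1 b2 b3 where b: "b1 \<in> A" "b2 \<in> A" "b3 \<in> A" "b1 \<noteq> b2" "p \<noteq> []"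
    and p: "prefix p (\<sigma> b1)" "prefix p (\<sigma> b2)" "prefix p (\<sigma> b3)"
    and right: "right_letter p b2 = right_letter p b1" "right_letter p b1 \<noteq> right_letter p b3"
    by (rule Tplus_not_single_branching[OF fin two T])
  obtain a1 a2 where a: "a1 \<in> A" "a2 \<in> A" "a1 \<noteq> a2" using two by (rule card_ge_2_obtain)
  then obtain s where s: "strict_suffix s (\<sigma> a1)" "strict_suffix s (\<sigma> a2)"
    and left: "left_letter s a1 \<noteq> left_letter s a2" by (rule left_branching_pair)
  have b3: "b1 \<noteq> b3" "b2 \<noteq> b3" using right by auto
  define P where "P = {(a1, b1), (a1, b3), (a2, b3), (a2, b2)}"
  show ?thesis
  proof (rule not_dendric_preserving_witness[where P = P and s = s and p = p and
        C = "left_letter s a1" and C' = "left_letter s a2" and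
        D = "right_letter p b1" and D' = "right_letter p b3", OF fin two])
    show "is_tree (Inl ` fst ` P \<union> Inr ` snd ` P)
      (\<lambda>u v. \<exists>a b. (a, b) \<in> P \<and> (u = Inl a \<and> v = Inr b \<or> u = Inr b \<and> v = Inl a))"
      using is_tree_zigzag_right[of a1 a2 b1 b3 b2] a(3) b(4) b3 unfolding P_def by simp
    show "card (fst ` P) \<ge> 2" "card (snd ` P) \<ge> 2"
      using a(3) b3 unfolding P_def by (auto simp: card_insert_if)
    show "{(left_letter s a1, right_letter p b1), (left_letter s a2, right_letter p b1),
        (left_letter s a2, right_letter p b3), (left_letter s a1, right_letter p b3)}
      \<subseteq> map_prod (left_letter s) (right_letter p) ` P"
      using right(1) unfolding P_def by force
  qed (use a b s p left right in \<open>auto simp: P_def\<close>)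
qed

end

theorem corollary4p7:
  fixes A :: "'a set" and B :: "'b set" and \<sigma> :: "'a \<Rightarrow> 'b list" and l :: 'b
  assumes "finite A" and "card A \<ge> 2" and "finite B"
    and "is_morphism A B \<sigma>"
    and "injective_morphism A \<sigma>"
    and "strongly_left_proper A \<sigma> l"
  shows "(card (Tminus A \<sigma>) = 1 \<and> card (Tplus A \<sigma>) = 1) \<longleftrightarrow>
         (\<forall>X. shift_space A X \<longrightarrow>
            (\<forall>v\<in>lang X. bispecial X v \<and> dendric X v \<longrightarrow> dendric_preserving \<sigma> l X v))"
proof -
  interpret strongly_left_proper_morphism A \<sigma> l
    using assms(6) injective_morphism_inj_on[OF assms(5)] by unfold_locales
  show ?thesis
  proof
    assume "card (Tminus A \<sigma>) = 1 \<and> card (Tplus A \<sigma>) = 1"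
    then show "\<forall>X. shift_space A X \<longrightarrow>
        (\<forall>v\<in>lang X. bispecial X v \<and> dendric X v \<longrightarrow> dendric_preserving \<sigma> l X v)"
      using dendric_preserving_if_Tminus_Tplus_single by blast
  next
    assume "\<forall>X. shift_space A X \<longrightarrow>
        (\<forall>v\<in>lang X. bispecial X v \<and> dendric X v \<longrightarrow> dendric_preserving \<sigma> l X v)"
    then show "card (Tminus A \<sigma>) = 1 \<and> card (Tplus A \<sigma>) = 1"
      using not_dendric_preserving_if_Tminus_not_single[OF assms(1,2)]
        not_dendric_preserving_if_Tplus_not_single[OF assms(1,2)] by blast
  qed
qed

end
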